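(* Let $X$ be a compact Hausdorff space, $N\ge1$, and $\phi_1,\dots,\phi_m$ real-valued continuous functions on $X$. For $d\ge1$ let $\mathcal C(X,d,\boldsymbol\phi)$ be the set of $d\times d$ matrix-valued Borel measures $\mu$ on $X$ with $\mu(\Delta)\ge0$ for all Borel $\Delta$, $\mu(X)=I_d$, and $\int_X\phi_r\,d\mu=0$ for $r=1,\dots,m$. Suppose $\mu=\sum_{k=1}^n\mu_kL_k$, where (i) each $\mu_k$ is a positive scalar measure which is an extreme point of $\mathcal C(X,1,\boldsymbol\phi)$, and the supports $\operatorname{supp}\mu_k$, $k=1,\dots,n$, are pairwise disjoint; (ii) the $N\times N$ matrices $L_k$ satisfy $L_k\ge0$ for each $k$ and $\sum_{k=1}^nL_k=I_N$; (iii) the family of subspaces $\{\operatorname{Ran}L_k : k=1,\dots,n\}$ of $\mathbb C^N$ is weakly independent. Then $\mu$ is an extreme point of $\mathcal C(X,N,\boldsymbol\phi)$.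
   Context: An operator $T$ on $\mathbb C^N$ lives on a subspace $\mathcal M$ if $T=TP_{\mathcal M}=P_{\mathcal M}T$, with $P_{\mathcal M}$ the orthogonal projection onto $\mathcal M$. A family of subspaces $\{\mathcal M_1,\dots,\mathcal M_n\}$ of $\mathbb C^N$ is weakly independent if whenever $T_1,\dots,T_n$ are linear operators on $\mathbb C^N$ with $T_j$ living on $\mathcal M_j$ for each $j$ and $\sum_{j=1}^nT_j=0$, it follows that $T_j=0$ for all $j$. *)

theory Defs
  imports "HOL-Analysis.Analysis"
begin

(* d x d complex matrices are  complex^'d^'d  (dimension d = CARD('d)). *)

definition adj :: "complex^'n^'m \<Rightarrow> complex^'m^'n" where
  "adj A = (\<chi> i j. cnj (A $ j $ i))"

definition cscale :: "complex \<Rightarrow> complex^'n^'m \<Rightarrow> complex^'n^'m" where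
  "cscale c A = (\<chi> i j. c * A $ i $ j)"

definition qf :: "complex^'d^'d \<Rightarrow> complex^'d \<Rightarrow> complex" where
  "qf A v = (\<Sum>i\<in>UNIV. cnj (v $ i) * (A *v v) $ i)"

definition psd :: "complex^'d^'d \<Rightarrow> bool" where
  "psd A \<longleftrightarrow> (\<forall>v. Im (qf A v) = 0 \<and> Re (qf A v) \<ge> 0)"

(* matrix-valued Borel measure on X = UNIV :: 'a set: countably additive (entrywise)
   on the Borel sets; by convention it is 0 on non-Borel sets. *)
definition mat_measure :: "('a::topological_space set \<Rightarrow> complex^'d^'d) \<Rightarrow> bool" where
  "mat_measure \<mu> \<longleftrightarrow>
     (\<forall>\<Delta>. \<Delta> \<notin> sets borel \<longrightarrow> \<mu> \<Delta> = 0) \<and>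
     (\<forall>A. range A \<subseteq> sets borel \<longrightarrow> disjoint_family A \<longrightarrow>
        (\<forall>i j. (\<lambda>k. \<mu> (A k) $ i $ j) sums (\<mu> (\<Union>k. A k) $ i $ j)))"

definition qmeas :: "('a::topological_space set \<Rightarrow> complex^'d^'d) \<Rightarrow> complex^'d \<Rightarrow> 'a measure" where
  "qmeas \<mu> v = measure_of UNIV (sets borel) (\<lambda>\<Delta>. ennreal (Re (qf (\<mu> \<Delta>) v)))"

(* the matrix  \<integral> f d\<mu>, entry (i,j) = \<integral> f d\<mu>_ij, obtained by polarization:
   e_i* M e_j = 1/4 \<Sum>_{k<4} i^k (e_j + i^k e_i)* M (e_j + i^k e_i) *)
definition mat_integral :: "('a::topological_space set \<Rightarrow> complex^'d^'d) \<Rightarrow> ('a \<Rightarrow> real) \<Rightarrow> complex^'d^'d" where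
  "mat_integral \<mu> f = (\<chi> i j. (1/4) * (\<Sum>k<(4::nat). \<i> ^ k *
       complex_of_real (integral\<^sup>L (qmeas \<mu> (axis j 1 + (\<i> ^ k) *s axis i 1)) f)))"

(* C(X,d,phi) with phi = (phi_0,...,phi_{m-1}) *)
definition Cset :: "nat \<Rightarrow> (nat \<Rightarrow> 'a::topological_space \<Rightarrow> real) \<Rightarrow> ('a set \<Rightarrow> complex^'d^'d) set" where
  "Cset m \<phi> = {\<mu>. mat_measure \<mu> \<and> (\<forall>\<Delta>\<in>sets borel. psd (\<mu> \<Delta>)) \<and> \<mu> UNIV = mat 1 \<and>
                    (\<forall>r<m. mat_integral \<mu> (\<phi> r) = 0)}"

definition extreme_pt :: "('b \<Rightarrow> complex^'d^'d) set \<Rightarrow> ('b \<Rightarrow> complex^'d^'d) \<Rightarrow> bool" where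
  "extreme_pt C \<mu> \<longleftrightarrow> \<mu> \<in> C \<and>
     (\<forall>\<nu>1\<in>C. \<forall>\<nu>2\<in>C. \<forall>t::real. 0 < t \<and> t < 1 \<and>
        \<mu> = (\<lambda>\<Delta>. t *\<^sub>R \<nu>1 \<Delta> + (1 - t) *\<^sub>R \<nu>2 \<Delta>) \<longrightarrow> \<nu>1 = \<mu> \<and> \<nu>2 = \<mu>)"

definition supp :: "('a::topological_space set \<Rightarrow> complex^'d^'d) \<Rightarrow> 'a set" where
  "supp \<mu> = {x. \<forall>U. open U \<and> x \<in> U \<longrightarrow> \<mu> U \<noteq> 0}"

definition mat_range :: "complex^'n^'n \<Rightarrow> (complex^'n) set" where
  "mat_range A = range (\<lambda>v. A *v v)"

definition orth_proj :: "complex^'n^'n \<Rightarrow> (complex^'n) set \<Rightarrow> bool" where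
  "orth_proj P M \<longleftrightarrow> P ** P = P \<and> adj P = P \<and> mat_range P = M"

definition lives_on :: "complex^'n^'n \<Rightarrow> (complex^'n) set \<Rightarrow> bool" where
  "lives_on T M \<longleftrightarrow> (\<exists>P. orth_proj P M \<and> T = T ** P \<and> T = P ** T)"

definition weakly_independent :: "nat \<Rightarrow> (nat \<Rightarrow> (complex^'n) set) \<Rightarrow> bool" where
  "weakly_independent n M \<longleftrightarrow>
     (\<forall>T::nat \<Rightarrow> complex^'n^'n. (\<forall>j<n. lives_on (T j) (M j)) \<and> (\<Sum>j<n. T j) = 0
        \<longrightarrow> (\<forall>j<n. T j = 0))"

end

theory Submission
  imports Defs
begin

text \<open>Suppose \<open>\<mu> = t \<nu>\<^sub>1 + (1 - t) \<nu>\<^sub>2\<close> with \<open>\<nu>\<^sub>1, \<nu>\<^sub>2 \<in> \<C>(X,N,\<phi>)\<close>. Disjoint compact supports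
  give disjoint Borel carriers \<open>S\<^sub>k\<close> of the \<open>\<mu>\<^sub>k\<close>, and \<open>\<nu>\<^sub>1\<close> splits as \<open>\<Sum>\<^sub>k N\<^sub>k\<close> with
  \<open>N\<^sub>k(\<Delta>) = \<nu>\<^sub>1(\<Delta> \<inter> S\<^sub>k)\<close>. Since \<open>t N\<^sub>k \<le> \<mu>\<^sub>k L\<^sub>k\<close>, each \<open>N\<^sub>k(\<Delta>)\<close> and each moment
  \<open>\<integral> \<phi>\<^sub>r dN\<^sub>k\<close> lives on \<open>Ran L\<^sub>k\<close>; these moments sum to \<open>\<integral> \<phi>\<^sub>r d\<nu>\<^sub>1 = 0\<close>, and the
  \<open>N\<^sub>k(X) - L\<^sub>k\<close> sum to \<open>\<nu>\<^sub>1(X) - I = 0\<close>, so weak independence makes all of them vanish.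
  Hence for every vector \<open>w\<close> the scalar measure \<open>w* N\<^sub>k w\<close> is dominated by \<open>\<mu>\<^sub>k\<close>, annihilates
  the \<open>\<phi>\<^sub>r\<close> and has total mass \<open>w* L\<^sub>k w\<close>; extremality of \<open>\<mu>\<^sub>k\<close> forces
  \<open>w* N\<^sub>k w = (w* L\<^sub>k w) \<mu>\<^sub>k\<close>, i.e. \<open>N\<^sub>k = \<mu>\<^sub>k L\<^sub>k\<close> and \<open>\<nu>\<^sub>1 = \<mu>\<close>.\<close>

section \<open>Sesquilinear forms on \<open>complex^'n\<close>\<close>

definition cinner :: "complex^'n \<Rightarrow> complex^'n \<Rightarrow> complex" where
  "cinner x y = (\<Sum>i\<in>UNIV. cnj (x$i) * y$i)"

lemma qf_cinner: "qf A v = cinner v (A *v v)"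
  by (simp add: qf_def cinner_def)

lemma qf_expand: "qf A w = (\<Sum>i\<in>UNIV. \<Sum>j\<in>UNIV. cnj (w$i) * A$i$j * w$j)"
  by (simp add: qf_def matrix_vector_mult_def sum_distrib_left mult.assoc)

lemma cinner_add_left: "cinner (x + y) z = cinner x z + cinner y z"
  by (simp add: cinner_def distrib_right sum.distrib)

lemma cinner_add_right: "cinner z (x + y) = cinner z x + cinner z y"
  by (simp add: cinner_def distrib_left sum.distrib)

lemma cinner_diff_right: "cinner z (x - y) = cinner z x - cinner z y"
  by (simp add: cinner_def right_diff_distrib sum_subtractf)

lemma cinner_scale_left: "cinner (c *s x) z = cnj c * cinner x z"
  by (simp add: cinner_def sum_distrib_left mult.assoc)

lemma cinner_scale_right: "cinner z (c *s x) = c * cinner z x"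
  by (simp add: cinner_def sum_distrib_left mult.left_commute)

lemma cinner_zero_right [simp]: "cinner z 0 = 0"
  by (simp add: cinner_def)

lemma cinner_commute: "cinner y x = cnj (cinner x y)"
  by (simp add: cinner_def mult.commute)

lemma cinner_axis_left: "cinner (axis i 1) y = y $ i"
  by (simp add: cinner_def axis_def if_distrib if_distribR cong: if_cong)

lemma cinner_self_eq_0: "Re (cinner x x) = 0 \<Longrightarrow> x = 0"
proof -
  assume "Re (cinner x x) = 0"
  moreover have "Re (cinner x x) = (\<Sum>i\<in>UNIV. (cmod (x$i))^2)"
    unfolding cinner_def Re_sum by (rule sum.cong) (auto simp: cmod_power2, simp add: power2_eq_square)
  ultimately have "(\<Sum>i\<in>UNIV. (cmod (x$i))^2) = 0" by simp
  hence "\<forall>i. (cmod (x$i))^2 = 0" by (subst (asm) sum_nonneg_eq_0_iff) auto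
  thus "x = 0" by (simp add: vec_eq_iff)
qed

lemma inner_vec_cinner: "x \<bullet> y = Re (cinner x y)"
  by (simp add: inner_vec_def cinner_def Re_sum inner_complex_def)

lemma vec_eq_cinner: "(\<And>y. cinner x y = cinner x' y) \<Longrightarrow> x = x'"
  by (metis cinner_axis_left cinner_commute complex_cnj_cnj vec_eq_iff)

lemma mv_axis: "(A *v axis j 1) $ i = A $ i $ j"
  by (simp add: matrix_vector_mult_def axis_def if_distrib if_distribR cong: if_cong)

lemma cinner_adj: "cinner x (A *v y) = cinner (adj A *v x) y"
proof -
  have "cinner x (A *v y) = (\<Sum>i\<in>UNIV. \<Sum>j\<in>UNIV. cnj (x$i) * A$i$j * y$j)"
    by (simp add: cinner_def matrix_vector_mult_def sum_distrib_left mult.assoc)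
  also have "\<dots> = (\<Sum>j\<in>UNIV. \<Sum>i\<in>UNIV. cnj (x$i) * A$i$j * y$j)"
    by (rule sum.swap)
  also have "\<dots> = cinner (adj A *v x) y"
    by (simp add: cinner_def matrix_vector_mult_def adj_def sum_distrib_right sum_distrib_left cnj_sum ac_simps)
  finally show ?thesis .
qed

lemma adj_mult: "adj (A ** B) = adj B ** adj A"
  by (rule iffD2[OF matrix_eq], intro allI vec_eq_cinner)
     (simp add: cinner_adj[symmetric] matrix_vector_mul_assoc[symmetric])

lemma qf_add_scale:
  "qf A (x + c *s y) =
     qf A x + c * cinner x (A *v y) + cnj c * cinner y (A *v x) + cnj c * c * qf A y"
  by (simp add: qf_cinner matrix_vector_right_distrib vector_scalar_commute cinner_add_left
      cinner_add_right cinner_scale_left cinner_scale_right algebra_simps)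

text \<open>The identity behind the definition of \<open>mat_integral\<close>.\<close>

lemma polarization:
  "A $ i $ j = (1/4) * (\<Sum>k<(4::nat). \<i> ^ k * qf A (axis j 1 + (\<i> ^ k) *s axis i 1))"
proof -
  have "qf A (axis j 1 + c *s axis i 1) = A$j$j + c * A$j$i + cnj c * A$i$j + cnj c * c * A$i$i"
    for c
    unfolding qf_add_scale by (simp add: qf_cinner cinner_axis_left mv_axis)
  thus ?thesis
    by (simp add: numeral_eq_Suc lessThan_Suc algebra_simps)
qed

lemma qf_eq_imp_eq: "(\<And>v. qf A v = qf B v) \<Longrightarrow> A = B"
  by (simp add: vec_eq_iff polarization[of A] polarization[of B])

lemma qf_add: "qf (A + B) v = qf A v + qf B v"
  by (simp add: qf_expand distrib_left distrib_right sum.distrib)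

lemma qf_zero [simp]: "qf 0 w = 0"
  by (simp add: qf_expand)

lemma qf_sum: "qf (\<Sum>k\<in>S. A k) v = (\<Sum>k\<in>S. qf (A k) v)"
  by (induction S rule: infinite_finite_induct) (auto simp: qf_add)

lemma qf_scaleR: "qf (r *\<^sub>R A) v = of_real r * qf A v"
proof -
  have "(r *\<^sub>R A)$i$j = of_real r * A$i$j" for i j
    by (simp only: vector_scaleR_component) (simp add: scaleR_conv_of_real)
  thus ?thesis by (simp add: qf_expand sum_distrib_left mult_ac)
qed

lemma qf_cscale: "qf (cscale c A) v = c * qf A v"
  by (simp add: qf_expand cscale_def sum_distrib_left mult_ac)

lemma qf_scale: "qf A (c *s v) = cnj c * c * qf A v"
  by (simp add: qf_cinner vector_scalar_commute cinner_scale_left cinner_scale_right mult.assoc)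

lemma qf_adj: "qf (adj A) v = cnj (qf A v)"
  by (simp add: qf_cinner cinner_adj[symmetric] cinner_commute[of v])

lemma qf_conj_adj: "adj P = P \<Longrightarrow> qf (P ** A ** P) w = qf A (P *v w)"
  by (simp add: qf_cinner matrix_vector_mul_assoc[symmetric] cinner_adj)

lemma qf_1x1: "qf (X::complex^1^1) v = cnj (v$1) * X$1$1 * v$1"
  by (simp add: qf_expand)

section \<open>Hermitian and positive semidefinite matrices\<close>

definition herm :: "complex^'n^'n \<Rightarrow> bool" where
  "herm A \<longleftrightarrow> adj A = A"

lemma herm_iff_qf_real: "herm A \<longleftrightarrow> (\<forall>v. Im (qf A v) = 0)"
proof
  assume "herm A"
  hence "qf A v = cnj (qf A v)" for v using qf_adj[of A v] by (simp add: herm_def)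
  thus "\<forall>v. Im (qf A v) = 0" by (metis Reals_cnj_iff complex_is_Real_iff)
next
  assume "\<forall>v. Im (qf A v) = 0"
  hence "qf (adj A) v = qf A v" for v by (simp add: qf_adj complex_eq_iff)
  thus "herm A" unfolding herm_def by (rule qf_eq_imp_eq)
qed

lemma herm_qf_real: "herm A \<Longrightarrow> qf A v = of_real (Re (qf A v))"
  by (simp add: herm_iff_qf_real complex_eq_iff)

lemma psd_herm: "psd A \<Longrightarrow> herm A"
  by (simp add: psd_def herm_iff_qf_real)

lemma herm_sum: "(\<And>k. k \<in> S \<Longrightarrow> herm (A k)) \<Longrightarrow> herm (\<Sum>k\<in>S. A k)"
  by (simp add: herm_iff_qf_real qf_sum Im_sum)

lemma herm_eqI:
  assumes "herm A" "herm B" "\<And>v. Re (qf A v) = Re (qf B v)"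
  shows "A = B"
  using assms by (intro qf_eq_imp_eq) (simp add: herm_iff_qf_real complex_eq_iff)

text \<open>Otherwise \<open>(x + s y)* A (x + s y) = 2 s Re (y* A x) + s\<^sup>2 y* A y\<close> is negative for some
  real \<open>s\<close> and some \<open>y\<close>.\<close>

lemma psd_null_vector:
  assumes "psd A" "Re (qf A x) = 0"
  shows "A *v x = 0"
proof -
  have "Re (cinner y (A *v x)) = 0" for y
  proof -
    define a where "a = Re (cinner y (A *v x))"
    define b where "b = Re (qf A y)"
    have b0: "b \<ge> 0" using assms(1) by (simp add: psd_def b_def)
    have "cinner x (A *v y) = cnj (cinner y (A *v x))"
      using psd_herm[OF assms(1)] by (metis cinner_adj cinner_commute herm_def)
    hence "Re (qf A (x + of_real s *s y)) = 2 * s * a + s^2 * b" for s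
      using assms(2) by (simp add: qf_add_scale a_def b_def power2_eq_square)
    hence ineq: "0 \<le> 2 * s * a + s^2 * b" for s
      using assms(1) psd_def by metis
    define s where "s = -a / (b + 1)"
    have e: "s * (b + 1) = -a" using b0 by (simp add: s_def)
    have "(b + 1)^2 * (2 * s * a + s^2 * b) = 2 * a * (s * (b + 1)) * (b + 1) + (s * (b + 1))^2 * b"
      by (simp add: algebra_simps power2_eq_square)
    also have "\<dots> = - (a^2 * (b + 2))"
      unfolding e by (simp add: algebra_simps power2_eq_square)
    finally have "(b + 1)^2 * (2 * s * a + s^2 * b) = - (a^2 * (b + 2))" .
    hence "a^2 * (b + 2) \<le> 0" using ineq[of s] by (smt (verit) zero_le_mult_iff zero_le_power2)
    thus ?thesis using b0 by (simp add: a_def mult_le_0_iff)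
  qed
  thus ?thesis using cinner_self_eq_0 by blast
qed

lemma psd_1x1_iff: "psd (X::complex^1^1) \<longleftrightarrow> Im (X$1$1) = 0 \<and> Re (X$1$1) \<ge> 0"
proof
  assume "psd X"
  hence "Im (qf X (axis 1 1)) = 0 \<and> Re (qf X (axis 1 1)) \<ge> 0" by (simp add: psd_def)
  thus "Im (X$1$1) = 0 \<and> Re (X$1$1) \<ge> 0" by (simp add: qf_1x1)
next
  assume a: "Im (X$1$1) = 0 \<and> Re (X$1$1) \<ge> 0"
  hence "X$1$1 = of_real (Re (X$1$1))" by (simp add: complex_eq_iff)
  hence "qf X v = of_real ((cmod (v$1))^2 * Re (X$1$1))" for v
    by (simp add: qf_1x1 complex_norm_square[symmetric] ac_simps)
  thus "psd X" using a by (simp add: psd_def)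
qed

section \<open>Orthogonal projections onto complex subspaces\<close>

definition csubspace :: "(complex^'n) set \<Rightarrow> bool" where
  "csubspace V \<longleftrightarrow> V \<noteq> {} \<and> (\<forall>x\<in>V. \<forall>y\<in>V. x + y \<in> V) \<and> (\<forall>c. \<forall>x\<in>V. c *s x \<in> V)"

lemma csubspace_zero: "csubspace V \<Longrightarrow> 0 \<in> V"
  unfolding csubspace_def by (metis all_not_in_conv vector_smult_lzero)

lemma csubspace_diff:
  assumes "csubspace V" "x \<in> V" "y \<in> V"
  shows "x - y \<in> V"
proof -
  have "x + (-1) *s y \<in> V" using assms unfolding csubspace_def by blast
  moreover have "x + (-1) *s y = x - y" by (simp add: vec_eq_iff)
  ultimately show ?thesis by simp
qed

lemma scaleR_vec_eq_cscale: "c *\<^sub>R (x::complex^'n) = of_real c *s x"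
  unfolding vec_eq_iff
  by (simp only: vector_scaleR_component vector_smult_component) (simp add: scaleR_conv_of_real)

lemma csubspace_span: "csubspace V \<Longrightarrow> span V = V"
  unfolding span_eq_iff subspace_def
  by (auto simp: csubspace_zero csubspace_def scaleR_vec_eq_cscale)

lemma csubspace_mat_range: "csubspace (mat_range L)"
  unfolding csubspace_def mat_range_def
  by (auto simp: image_iff matrix_vector_right_distrib[symmetric] vector_scalar_commute[symmetric])

text \<open>The real orthogonal decomposition suffices: \<open>V\<close> is closed under multiplication by
  \<open>\<i>\<close>, so real orthogonality to \<open>V\<close> kills the imaginary part of \<open>cinner\<close> as well.\<close>

lemma csubspace_orthogonal_decomp:
  assumes "csubspace V"
  shows "\<exists>y\<in>V. \<forall>w\<in>V. cinner w (x - y) = 0"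
proof -
  obtain y z where y: "y \<in> span V" and z: "\<And>w. w \<in> span V \<Longrightarrow> orthogonal z w"
    and xyz: "x = y + z"
    using orthogonal_subspace_decomp_exists by blast
  have "Re (cinner w z) = 0" if "w \<in> V" for w
    using z[of w] that csubspace_span[OF assms]
    by (simp add: orthogonal_def inner_vec_cinner cinner_commute[of z])
  moreover have "\<i> *s w \<in> V" if "w \<in> V" for w
    using that assms by (simp add: csubspace_def)
  ultimately have "cinner w z = 0" if "w \<in> V" for w
    using that by (force simp: complex_eq_iff cinner_scale_left)
  thus ?thesis using y xyz csubspace_span[OF assms] by (intro bexI[of _ y]) auto
qed

definition orth_pr :: "(complex^'n) set \<Rightarrow> complex^'n \<Rightarrow> complex^'n" where
  "orth_pr V x = (SOME y. y \<in> V \<and> (\<forall>w\<in>V. cinner w (x - y) = 0))"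

lemma
  assumes "csubspace V"
  shows orth_pr_in: "orth_pr V x \<in> V"
    and orth_pr_orthogonal: "w \<in> V \<Longrightarrow> cinner w (x - orth_pr V x) = 0"
  using someI_ex[OF csubspace_orthogonal_decomp[OF assms, of x, unfolded Bex_def]]
  unfolding orth_pr_def by auto

lemma orth_pr_unique:
  assumes V: "csubspace V" and "y \<in> V" "\<And>w. w \<in> V \<Longrightarrow> cinner w (x - y) = 0"
  shows "orth_pr V x = y"
proof -
  define d where "d = y - orth_pr V x"
  have dV: "d \<in> V" unfolding d_def by (rule csubspace_diff[OF V assms(2) orth_pr_in[OF V]])
  have "cinner d d = cinner d (x - orth_pr V x) - cinner d (x - y)"
    by (simp add: d_def cinner_diff_right)
  also have "\<dots> = 0" using orth_pr_orthogonal[OF V dV] assms(3)[OF dV] by simp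
  finally show ?thesis using cinner_self_eq_0[of d] by (simp add: d_def)
qed

lemma orth_pr_id: "csubspace V \<Longrightarrow> v \<in> V \<Longrightarrow> orth_pr V v = v"
  by (rule orth_pr_unique) auto

lemma orth_pr_linear:
  assumes V: "csubspace V"
  shows "orth_pr V (c *s x + y) = c *s orth_pr V x + orth_pr V y"
proof (rule orth_pr_unique[OF V])
  show "c *s orth_pr V x + orth_pr V y \<in> V"
    using orth_pr_in[OF V] V by (simp add: csubspace_def)
  have e: "c *s x + y - (c *s orth_pr V x + orth_pr V y) = c *s (x - orth_pr V x) + (y - orth_pr V y)"
    by (simp add: vec_eq_iff algebra_simps)
  show "cinner w (c *s x + y - (c *s orth_pr V x + orth_pr V y)) = 0" if "w \<in> V" for w
    unfolding e using orth_pr_orthogonal[OF V that]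
    by (simp only: cinner_add_right cinner_scale_right) simp
qed

definition orth_pr_matrix :: "(complex^'n) set \<Rightarrow> complex^'n^'n" where
  "orth_pr_matrix V = (\<chi> i j. orth_pr V (axis j 1) $ i)"

lemma orth_pr_matrix_mv:
  assumes V: "csubspace V"
  shows "orth_pr_matrix V *v x = orth_pr V x"
proof -
  have zero: "orth_pr V 0 = 0" by (rule orth_pr_id[OF V csubspace_zero[OF V]])
  have sum: "orth_pr V (\<Sum>j\<in>S. f j) = (\<Sum>j\<in>S. orth_pr V (f j))" if "finite S" for S f
    using that
  proof (induction S rule: finite_induct)
    case (insert a S) thus ?case using orth_pr_linear[OF V, of 1] by simp
  qed (simp add: zero)
  have "orth_pr V x = orth_pr V (\<Sum>j\<in>UNIV. x$j *s axis j 1)"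
    by (simp add: basis_expansion)
  also have "\<dots> = (\<Sum>j\<in>UNIV. x$j *s orth_pr V (axis j 1))"
    using orth_pr_linear[OF V, of _ _ 0] by (simp add: sum zero)
  also have "\<dots> = orth_pr_matrix V *v x"
    by (simp add: vec_eq_iff orth_pr_matrix_def matrix_vector_mult_def sum_component mult.commute)
  finally show ?thesis by simp
qed

lemma orth_proj_orth_pr_matrix:
  assumes V: "csubspace V"
  shows "orth_proj (orth_pr_matrix V) V"
proof -
  let ?P = "orth_pr_matrix V"
  have idem: "?P ** ?P = ?P"
    by (simp add: matrix_eq matrix_vector_mul_assoc[symmetric] orth_pr_matrix_mv[OF V]
        orth_pr_id[OF V orth_pr_in[OF V]])
  have sym: "cinner x (orth_pr V y) = cinner (orth_pr V x) (orth_pr V y)" for x y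
  proof -
    have "cinner x (orth_pr V y) = cinner (orth_pr V x + (x - orth_pr V x)) (orth_pr V y)"
      by simp
    also have "\<dots> = cinner (orth_pr V x) (orth_pr V y) + cnj (cinner (orth_pr V y) (x - orth_pr V x))"
      by (simp only: cinner_add_left cinner_commute[of "x - orth_pr V x"])
    also have "\<dots> = cinner (orth_pr V x) (orth_pr V y)"
      using orth_pr_orthogonal[OF V orth_pr_in[OF V]] by simp
    finally show ?thesis .
  qed
  have "adj ?P = ?P"
    unfolding matrix_eq
  proof (intro allI vec_eq_cinner)
    fix x y
    have "cinner (adj ?P *v x) y = cinner x (orth_pr V y)"
      by (simp add: cinner_adj[symmetric] orth_pr_matrix_mv[OF V])
    also have "\<dots> = cinner (orth_pr V x) (orth_pr V y)"
      by (rule sym)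
    also have "\<dots> = cinner (orth_pr V x) y"
      using sym[of y x] by (metis cinner_commute)
    finally show "cinner (adj ?P *v x) y = cinner (?P *v x) y"
      by (simp add: orth_pr_matrix_mv[OF V])
  qed
  moreover have "mat_range ?P = V"
    using orth_pr_in[OF V] orth_pr_id[OF V]
    by (auto simp: mat_range_def orth_pr_matrix_mv[OF V] image_iff) metis
  ultimately show ?thesis using idem by (simp add: orth_proj_def)
qed

section \<open>Matrices living on the range of a positive matrix\<close>

definition range_proj :: "complex^'n^'n \<Rightarrow> complex^'n^'n" where
  "range_proj L = orth_pr_matrix (mat_range L)"

lemma orth_proj_range_proj: "orth_proj (range_proj L) (mat_range L)"
  unfolding range_proj_def by (rule orth_proj_orth_pr_matrix[OF csubspace_mat_range])

lemma range_proj_idem: "range_proj L ** range_proj L = range_proj L"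
  and adj_range_proj: "adj (range_proj L) = range_proj L"
  using orth_proj_range_proj[of L] by (auto simp: orth_proj_def)

lemma range_proj_mv: "range_proj L *v x = orth_pr (mat_range L) x"
  unfolding range_proj_def by (rule orth_pr_matrix_mv[OF csubspace_mat_range])

lemma range_proj_mult_left: "range_proj L ** L = L"
proof -
  have "orth_pr (mat_range L) (L *v x) = L *v x" for x
    by (rule orth_pr_id[OF csubspace_mat_range]) (simp add: mat_range_def)
  thus ?thesis by (simp add: matrix_eq matrix_vector_mul_assoc[symmetric] range_proj_mv)
qed

lemma herm_null_range_proj_complement:
  assumes "herm L"
  shows "L *v (x - range_proj L *v x) = 0"
proof -
  let ?z = "x - range_proj L *v x"
  have "cinner (L *v y) ?z = 0" for y
    unfolding range_proj_mv
    by (rule orth_pr_orthogonal[OF csubspace_mat_range]) (simp add: mat_range_def)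
  hence "cinner y (L *v ?z) = 0" for y
    using assms by (simp add: cinner_adj herm_def)
  thus ?thesis by (intro cinner_self_eq_0) simp
qed

lemma herm_range_proj_mult_right:
  assumes "herm L"
  shows "L ** range_proj L = L"
  unfolding matrix_eq
  using herm_null_range_proj_complement[OF assms]
  by (simp add: matrix_vector_mul_assoc[symmetric] matrix_vector_mult_diff_distrib)

lemma lives_on_range_projI:
  "T ** range_proj L = T \<Longrightarrow> range_proj L ** T = T \<Longrightarrow> lives_on T (mat_range L)"
  unfolding lives_on_def using orth_proj_range_proj[of L] by metis

text \<open>A positive matrix dominated by a multiple of \<open>L \<ge> 0\<close> vanishes on \<open>ker L\<close>, so it lives
  on \<open>Ran L\<close>.\<close>

lemma psd_dominated_lives_on_range:
  assumes A: "psd A" and L: "psd L" and le: "\<And>v. Re (qf A v) \<le> c * Re (qf L v)"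
  shows "A ** range_proj L = A" "range_proj L ** A = A"
proof -
  have "A *v (x - range_proj L *v x) = 0" for x
  proof (rule psd_null_vector[OF A])
    let ?z = "x - range_proj L *v x"
    have "Re (qf L ?z) = 0"
      using herm_null_range_proj_complement[OF psd_herm[OF L]] by (simp add: qf_cinner)
    thus "Re (qf A ?z) = 0"
      using le[of ?z] A by (simp add: psd_def order_antisym)
  qed
  thus A1: "A ** range_proj L = A"
    by (simp add: matrix_eq matrix_vector_mul_assoc[symmetric] matrix_vector_mult_diff_distrib)
  have "adj (A ** range_proj L) = range_proj L ** A"
    using psd_herm[OF A] by (simp add: adj_mult adj_range_proj herm_def)
  thus "range_proj L ** A = A" using A1 psd_herm[OF A] by (simp add: herm_def)
qed

lemma herm_lives_on_range:
  assumes h: "herm T" and e: "\<And>w. Re (qf T w) = Re (qf T (range_proj L *v w))"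
  shows "T ** range_proj L = T" "range_proj L ** T = T"
proof -
  let ?P = "range_proj L"
  have "herm (?P ** T ** ?P)"
    using h by (simp add: herm_def adj_mult adj_range_proj matrix_mul_assoc)
  hence eq: "?P ** T ** ?P = T"
    by (rule herm_eqI[OF _ h]) (simp add: qf_conj_adj[OF adj_range_proj] e[symmetric])
  have "T ** ?P = ?P ** T ** (?P ** ?P)"
    by (subst (1) eq[symmetric]) (simp only: matrix_mul_assoc)
  thus "T ** ?P = T" by (simp only: range_proj_idem eq)
  have "?P ** T = (?P ** ?P) ** T ** ?P"
    by (subst (1) eq[symmetric]) (simp only: matrix_mul_assoc)
  thus "?P ** T = T" by (simp only: range_proj_idem eq)
qed

section \<open>Integrals against a linear combination of finite measures\<close>

text \<open>The bound \<open>C\<close> is carried through the induction so that every function involved is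
  integrable against all the measures.\<close>

lemma integral_lincomb_measures_nonneg:
  fixes M :: "'i \<Rightarrow> 'a measure" and c :: "'i \<Rightarrow> real"
  assumes fin: "finite_measure N" "\<And>l. l \<in> I \<Longrightarrow> finite_measure (M l)"
    and sets: "\<And>l. l \<in> I \<Longrightarrow> sets (M l) = sets N"
    and eq: "\<And>A. A \<in> sets N \<Longrightarrow> measure N A = (\<Sum>l\<in>I. c l * measure (M l) A)"
    and u: "u \<in> borel_measurable N" "\<And>x. 0 \<le> u x"
  shows "(\<forall>x\<in>space N. u x \<le> C) \<longrightarrow> integral\<^sup>L N u = (\<Sum>l\<in>I. c l * integral\<^sup>L (M l) u)"
  using u
proof (induction arbitrary: C rule: borel_measurable_induct_real)
  let ?K = "insert N (M ` I)"
  have K_sets: "sets K = sets N" if "K \<in> ?K" for K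
    using that sets by auto
  have K: "finite_measure K" "sets K = sets N" "space K = space N"
    "borel_measurable K = borel_measurable N" if "K \<in> ?K" for K
    using that fin K_sets[OF that] sets_eq_imp_space_eq[OF K_sets[OF that]]
      measurable_cong_sets[OF K_sets[OF that] refl] by auto
  have integrable: "integrable K v"
    if "K \<in> ?K" "v \<in> borel_measurable N" "\<And>x. x \<in> space N \<Longrightarrow> \<bar>v x\<bar> \<le> B" for K v and B :: real
    using that K[OF that(1)] by (intro finite_measure.integrable_const_bound[where B=B]) auto
  {
    case (set A)
    have "integral\<^sup>L K (indicator A) = measure K A" if "K \<in> ?K" for K
      using sets.Int_space_eq2[of A K] K[OF that] set by simp
    hence "integral\<^sup>L N (indicator A) = (\<Sum>l\<in>I. c l * integral\<^sup>L (M l) (indicator A))"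
      using eq[OF set] by simp
    thus ?case ..
  next
    case (mult u a)
    show ?case
    proof
      assume C: "\<forall>x\<in>space N. a * u x \<le> C"
      show "integral\<^sup>L N (\<lambda>x. a * u x) = (\<Sum>l\<in>I. c l * integral\<^sup>L (M l) (\<lambda>x. a * u x))"
      proof (cases "a = 0")
        case False
        hence "\<forall>x\<in>space N. u x \<le> C / a"
          using C mult.hyps(1) False by (simp add: le_divide_eq mult.commute)
        hence "integral\<^sup>L N u = (\<Sum>l\<in>I. c l * integral\<^sup>L (M l) u)"
          using mult.IH by blast
        thus ?thesis by (simp add: sum_distrib_left mult.left_commute)
      qed simp
    qed
  next
    case (add u v)
    show ?case
    proof
      assume C: "\<forall>x\<in>space N. v x + u x \<le> C"
      have bound: "\<bar>u x\<bar> \<le> C" "\<bar>v x\<bar> \<le> C" if "x \<in> space N" for x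
        using C that add.hyps(2)[of x] add.hyps(4)[of x] by auto
      have "integral\<^sup>L K (\<lambda>x. v x + u x) = integral\<^sup>L K v + integral\<^sup>L K u" if "K \<in> ?K" for K
        using integrable[OF that add.hyps(3) bound(2)] integrable[OF that add.hyps(1) bound(1)]
        by simp
      moreover have "integral\<^sup>L N u = (\<Sum>l\<in>I. c l * integral\<^sup>L (M l) u)"
        "integral\<^sup>L N v = (\<Sum>l\<in>I. c l * integral\<^sup>L (M l) v)"
        using add.IH bound by (auto simp: abs_le_iff)
      ultimately show "integral\<^sup>L N (\<lambda>x. v x + u x) = (\<Sum>l\<in>I. c l * integral\<^sup>L (M l) (\<lambda>x. v x + u x))"
        by (simp add: distrib_left sum.distrib)
    qed
  next
    case (seq U)
    show ?case
    proof
      assume C: "\<forall>x\<in>space N. u x \<le> C"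
      have "U i x \<le> u x" if "x \<in> space N" for i x
        using seq.hyps(3) seq.hyps(4)[OF that] by (intro incseq_le) (auto simp: incseq_def le_fun_def)
      hence UC: "\<forall>x\<in>space N. U i x \<le> C" and Ubound: "\<bar>U i x\<bar> \<le> C" if "x \<in> space N" for i x
        using C seq.hyps(2)[of i x] that by (auto intro: order_trans)
      have lim: "(\<lambda>i. integral\<^sup>L K (U i)) \<longlonglongrightarrow> integral\<^sup>L K u" if K_in: "K \<in> ?K" for K
      proof (rule integral_dominated_convergence[where w="\<lambda>_. C"])
        show "u \<in> borel_measurable K"
          unfolding K(4)[OF K_in] by (rule u(1))
        show "U i \<in> borel_measurable K" for i
          unfolding K(4)[OF K_in] by (rule seq.hyps(1))
        show "integrable K (\<lambda>_. C)"
          using finite_measure.integrable_const[OF K(1)[OF K_in]] .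
        show "AE x in K. (\<lambda>i. U i x) \<longlonglongrightarrow> u x"
          using seq.hyps(4) K(3)[OF K_in] by (auto intro!: AE_I2)
        show "AE x in K. norm (U i x) \<le> C" for i
          using Ubound K(3)[OF K_in] by (auto intro!: AE_I2)
      qed
      have "(\<lambda>i. integral\<^sup>L N (U i)) = (\<lambda>i. \<Sum>l\<in>I. c l * integral\<^sup>L (M l) (U i))"
        using seq.IH UC by blast
      moreover have "(\<lambda>i. \<Sum>l\<in>I. c l * integral\<^sup>L (M l) (U i)) \<longlonglongrightarrow> (\<Sum>l\<in>I. c l * integral\<^sup>L (M l) u)"
        using lim by (intro tendsto_sum tendsto_mult_left) simp
      ultimately show "integral\<^sup>L N u = (\<Sum>l\<in>I. c l * integral\<^sup>L (M l) u)"
        using LIMSEQ_unique lim by fastforce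
    qed
  }
qed

lemma integral_lincomb_measures:
  fixes M :: "'i \<Rightarrow> 'a measure" and c :: "'i \<Rightarrow> real"
  assumes "finite_measure N" "\<And>l. l \<in> I \<Longrightarrow> finite_measure (M l)"
    and "\<And>l. l \<in> I \<Longrightarrow> sets (M l) = sets N"
    and "\<And>A. A \<in> sets N \<Longrightarrow> measure N A = (\<Sum>l\<in>I. c l * measure (M l) A)"
    and f: "f \<in> borel_measurable N" "\<And>x. x \<in> space N \<Longrightarrow> \<bar>f x\<bar> \<le> B"
  shows "integral\<^sup>L N f = (\<Sum>l\<in>I. c l * integral\<^sup>L (M l) f)"
proof -
  let ?K = "insert N (M ` I)"
  have K_sets: "sets K = sets N" if "K \<in> ?K" for K
    using that assms(3) by auto
  have K: "finite_measure K" "space K = space N" "borel_measurable K = borel_measurable N"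
    if "K \<in> ?K" for K
    using that assms(1,2) sets_eq_imp_space_eq[OF K_sets[OF that]]
      measurable_cong_sets[OF K_sets[OF that] refl] by auto
  define fp where "fp = (\<lambda>x. max 0 (f x))"
  define fn where "fn = (\<lambda>x. max 0 (- f x))"
  have meas: "fp \<in> borel_measurable N" "fn \<in> borel_measurable N"
    unfolding fp_def fn_def using f(1) by measurable
  have bound: "\<bar>fp x\<bar> \<le> B" "\<bar>fn x\<bar> \<le> B" if "x \<in> space N" for x
    using f(2)[OF that] by (auto simp: fp_def fn_def)
  have nonneg: "0 \<le> fp x" "0 \<le> fn x" for x
    by (simp_all add: fp_def fn_def)
  have "integral\<^sup>L K f = integral\<^sup>L K fp - integral\<^sup>L K fn" if "K \<in> ?K" for K
  proof -
    have "integrable K fp" "integrable K fn"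
      using K[OF that] meas bound
      by (auto intro!: finite_measure.integrable_const_bound[where B=B])
    moreover have "f = (\<lambda>x. fp x - fn x)" by (auto simp: fp_def fn_def fun_eq_iff)
    ultimately show ?thesis by simp
  qed
  moreover have "integral\<^sup>L N g = (\<Sum>l\<in>I. c l * integral\<^sup>L (M l) g)"
    if "g \<in> borel_measurable N" "\<And>x. 0 \<le> g x" "\<And>x. x \<in> space N \<Longrightarrow> \<bar>g x\<bar> \<le> B" for g
    using integral_lincomb_measures_nonneg[OF assms(1-4) that(1,2), of B] that(3) abs_le_D1
    by blast
  ultimately show ?thesis
    using meas nonneg bound by (simp add: right_diff_distrib sum_subtractf)
qed

section \<open>Positive matrix-valued measures\<close>

definition pos_mat_measure :: "('a::topological_space set \<Rightarrow> complex^'d^'d) \<Rightarrow> bool" where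
  "pos_mat_measure \<nu> \<longleftrightarrow> mat_measure \<nu> \<and> (\<forall>\<Delta>\<in>sets borel. psd (\<nu> \<Delta>))"

lemma Cset_pos_mat_measure: "\<nu> \<in> Cset m \<phi> \<Longrightarrow> pos_mat_measure \<nu>"
  by (simp add: Cset_def pos_mat_measure_def)

lemma mat_measure_sums:
  assumes "mat_measure \<nu>" "range A \<subseteq> sets borel" "disjoint_family A"
  shows "(\<lambda>k. \<nu> (A k) $ i $ j) sums (\<nu> (\<Union>k. A k) $ i $ j)"
  using assms by (simp add: mat_measure_def)

lemma mat_measure_empty:
  assumes "mat_measure \<nu>"
  shows "\<nu> {} = 0"
proof -
  have "(\<lambda>k. \<nu> {} $ i $ j) sums (\<nu> {} $ i $ j)" for i j
    using mat_measure_sums[OF assms, of "\<lambda>_. {}"] by (simp add: disjoint_family_on_def)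
  hence "summable (\<lambda>k. \<nu> {} $ i $ j)" for i j
    using sums_summable by force
  thus ?thesis by (simp add: vec_eq_iff summable_const_iff)
qed

lemma mat_measure_qf_sums:
  assumes "mat_measure \<nu>" "range A \<subseteq> sets borel" "disjoint_family A"
  shows "(\<lambda>k. qf (\<nu> (A k)) w) sums qf (\<nu> (\<Union>k. A k)) w"
  unfolding qf_expand
  by (rule sums_sum, rule sums_sum, rule sums_mult2, rule sums_mult, rule mat_measure_sums[OF assms])

lemma sigma_algebra_borel: "sigma_algebra UNIV (sets (borel :: 'a::topological_space measure))"
  using sets.sigma_algebra_axioms[of borel] by simp

lemma sets_qmeas [simp]: "sets (qmeas \<nu> w) = sets borel"
  unfolding qmeas_def by (rule sigma_algebra.sets_measure_of_eq[OF sigma_algebra_borel])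

lemma space_qmeas [simp]: "space (qmeas \<nu> w) = UNIV"
  using sets_eq_imp_space_eq[OF sets_qmeas[of \<nu> w]] by simp

lemma measurable_qmeas [simp]: "measurable (qmeas \<nu> w) M = measurable borel M"
  by (rule measurable_cong_sets) simp_all

lemma emeasure_qmeas:
  assumes \<nu>: "pos_mat_measure \<nu>" and "\<Delta> \<in> sets borel"
  shows "emeasure (qmeas \<nu> w) \<Delta> = ennreal (Re (qf (\<nu> \<Delta>) w))"
  unfolding qmeas_def
proof (rule emeasure_measure_of_sigma[OF _ _ _ assms(2)])
  have mm: "mat_measure \<nu>" using \<nu> by (simp add: pos_mat_measure_def)
  show "sigma_algebra UNIV (sets borel)"
    by (rule sigma_algebra_borel)
  show "positive (sets borel) (\<lambda>\<Delta>. ennreal (Re (qf (\<nu> \<Delta>) w)))"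
    unfolding positive_def using mat_measure_empty[OF mm] by simp
  show "countably_additive (sets borel) (\<lambda>\<Delta>. ennreal (Re (qf (\<nu> \<Delta>) w)))"
    unfolding countably_additive_def
  proof (intro allI impI)
    fix A :: "nat \<Rightarrow> 'a set" assume A: "range A \<subseteq> sets borel" "disjoint_family A"
    have s: "(\<lambda>k. Re (qf (\<nu> (A k)) w)) sums Re (qf (\<nu> (\<Union>k. A k)) w)"
      using sums_Re[OF mat_measure_qf_sums[OF mm A]] .
    have nonneg: "0 \<le> Re (qf (\<nu> (A k)) w)" for k
      using \<nu> A(1) unfolding pos_mat_measure_def psd_def by blast
    show "(\<Sum>i. ennreal (Re (qf (\<nu> (A i)) w))) = ennreal (Re (qf (\<nu> (\<Union> (range A))) w))"
      using suminf_ennreal2[OF nonneg sums_summable[OF s]] sums_unique[OF s] by simp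
  qed
qed

lemma measure_qmeas:
  assumes "pos_mat_measure \<nu>" "\<Delta> \<in> sets borel"
  shows "measure (qmeas \<nu> w) \<Delta> = Re (qf (\<nu> \<Delta>) w)"
  using assms emeasure_qmeas[OF assms]
  by (simp add: measure_def pos_mat_measure_def psd_def)

lemma finite_measure_qmeas: "pos_mat_measure \<nu> \<Longrightarrow> finite_measure (qmeas \<nu> w)"
  by (rule finite_measureI) (simp add: emeasure_qmeas)

lemma Re_qf_polarization_matrix:
  fixes g :: "'d::finite \<Rightarrow> 'd \<Rightarrow> nat \<Rightarrow> real"
  shows "Re (qf ((\<chi> i j. (1/4) * (\<Sum>k<(4::nat). \<i> ^ k * of_real (g i j k))) :: complex^'d^'d) w)
       = (\<Sum>(i,j,k)\<in>UNIV\<times>UNIV\<times>{..<4}. Re (cnj (w$i) * w$j * \<i> ^ k) / 4 * g i j k)"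
proof -
  have "Re (cnj (w$i) * ((1/4) * (\<Sum>k<(4::nat). \<i> ^ k * of_real (g i j k))) * w$j)
      = (\<Sum>k<(4::nat). Re (cnj (w$i) * w$j * \<i> ^ k) / 4 * g i j k)" for i j
  proof -
    have "cnj (w$i) * ((1/4) * (\<Sum>k<(4::nat). \<i> ^ k * of_real (g i j k))) * w$j
       = (\<Sum>k<(4::nat). (cnj (w$i) * w$j * \<i> ^ k / 4) * of_real (g i j k))"
      by (simp add: sum_distrib_left sum_distrib_right algebra_simps)
    also have "Re \<dots> = (\<Sum>k<(4::nat). Re (cnj (w$i) * w$j * \<i> ^ k) / 4 * g i j k)"
      by (simp add: Re_sum)
    finally show ?thesis .
  qed
  hence "Re (qf ((\<chi> i j. (1/4) * (\<Sum>k<(4::nat). \<i> ^ k * of_real (g i j k))) :: complex^'d^'d) w)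
      = (\<Sum>i\<in>UNIV. \<Sum>j\<in>UNIV. \<Sum>k<(4::nat). Re (cnj (w$i) * w$j * \<i> ^ k) / 4 * g i j k)"
    by (simp only: qf_expand Re_sum vec_lambda_beta)
  thus ?thesis by (simp add: sum.cartesian_product)
qed

lemma Re_qf_mat_integral:
  fixes \<nu> :: "'a::topological_space set \<Rightarrow> complex^'d^'d"
  assumes \<nu>: "pos_mat_measure \<nu>" and f: "f \<in> borel_measurable borel" "\<And>x. \<bar>f x\<bar> \<le> B"
  shows "Re (qf (mat_integral \<nu> f) w) = integral\<^sup>L (qmeas \<nu> w) f"
proof -
  define u where "u i j k = axis j 1 + (\<i> ^ k) *s axis i (1::complex)" for i j :: 'd and k :: nat
  define c where "c i j k = Re (cnj (w$i) * w$j * \<i> ^ k) / 4" for i j :: 'd and k :: nat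
  let ?I = "UNIV \<times> UNIV \<times> {..<4::nat}"
  have "measure (qmeas \<nu> w) A = (\<Sum>(i,j,k)\<in>?I. c i j k * measure (qmeas \<nu> (u i j k)) A)"
    if A: "A \<in> sets borel" for A
  proof -
    have h: "herm (\<nu> A)" using \<nu> A by (simp add: pos_mat_measure_def psd_herm)
    have "\<nu> A = (\<chi> i j. (1/4) * (\<Sum>k<(4::nat). \<i> ^ k * of_real (Re (qf (\<nu> A) (u i j k)))))"
      unfolding vec_eq_iff u_def
      by (simp add: polarization[of "\<nu> A"] herm_qf_real[OF h, symmetric])
    hence "Re (qf (\<nu> A) w) = (\<Sum>(i,j,k)\<in>?I. c i j k * Re (qf (\<nu> A) (u i j k)))"
      using Re_qf_polarization_matrix[of "\<lambda>i j k. Re (qf (\<nu> A) (u i j k))" w]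
      unfolding c_def by metis
    thus ?thesis using measure_qmeas[OF \<nu> A] by simp
  qed
  hence "integral\<^sup>L (qmeas \<nu> w) f = (\<Sum>(i,j,k)\<in>?I. c i j k * integral\<^sup>L (qmeas \<nu> (u i j k)) f)"
    using integral_lincomb_measures[where I="?I" and M="\<lambda>(i,j,k). qmeas \<nu> (u i j k)"
        and c="\<lambda>(i,j,k). c i j k" and N="qmeas \<nu> w" and f=f and B=B]
    using finite_measure_qmeas[OF \<nu>] f by (simp add: case_prod_beta split_def)
  also have "\<dots> = Re (qf (mat_integral \<nu> f) w)"
    unfolding mat_integral_def Re_qf_polarization_matrix c_def u_def by simp
  finally show ?thesis by simp
qed

lemma mat_integral_eq_0I: "(\<And>w. integral\<^sup>L (qmeas \<nu> w) f = 0) \<Longrightarrow> mat_integral \<nu> f = 0"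
  by (simp add: mat_integral_def vec_eq_iff)

lemma qmeas_unimodular: "cnj c * c = 1 \<Longrightarrow> qmeas \<nu> (c *s v) = qmeas \<nu> v"
  by (simp add: qmeas_def qf_scale)

text \<open>Hermitian symmetry of the polarization formula: the vectors \<open>e\<^sub>i + c e\<^sub>j\<close> and
  \<open>e\<^sub>j + c\<inverse> e\<^sub>i\<close> differ by the unimodular factor \<open>c\<close> when \<open>c\<close> is a fourth root of unity.\<close>

lemma herm_mat_integral: "herm (mat_integral \<nu> f)"
proof -
  have swap: "integral\<^sup>L (qmeas \<nu> (axis i 1 + c *s axis j 1)) f
      = integral\<^sup>L (qmeas \<nu> (axis j 1 + d *s axis i 1)) f"
    if "cnj c * c = 1" "c * d = 1" for c d i j
  proof -
    have "c * (x + d * y) = y + c * x" for x y :: complex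
      by (simp add: distrib_left mult.assoc[symmetric] that(2))
    hence "c *s (axis j 1 + d *s axis i 1) = axis i 1 + c *s axis j (1::complex)"
      using that(2) by (simp add: vec_eq_iff)
    thus ?thesis using qmeas_unimodular[OF that(1)] by metis
  qed
  have "integral\<^sup>L (qmeas \<nu> (axis i 1 + 1 *s axis j 1)) f
      = integral\<^sup>L (qmeas \<nu> (axis j 1 + 1 *s axis i 1)) f"
    "integral\<^sup>L (qmeas \<nu> (axis i 1 + \<i> *s axis j 1)) f
      = integral\<^sup>L (qmeas \<nu> (axis j 1 + (-\<i>) *s axis i 1)) f"
    "integral\<^sup>L (qmeas \<nu> (axis i 1 + (-1) *s axis j 1)) f
      = integral\<^sup>L (qmeas \<nu> (axis j 1 + (-1) *s axis i 1)) f"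
    "integral\<^sup>L (qmeas \<nu> (axis i 1 + (-\<i>) *s axis j 1)) f
      = integral\<^sup>L (qmeas \<nu> (axis j 1 + \<i> *s axis i 1)) f" for i j
    by (rule swap; simp)+
  thus ?thesis
    unfolding herm_def adj_def vec_eq_iff mat_integral_def
    by (simp add: numeral_eq_Suc lessThan_Suc complex_eq_iff)
qed

lemma mat_integral_sum:
  assumes "pos_mat_measure \<nu>" "\<And>j. j \<in> J \<Longrightarrow> pos_mat_measure (N j)"
    and "\<And>\<Delta>. \<Delta> \<in> sets borel \<Longrightarrow> \<nu> \<Delta> = (\<Sum>j\<in>J. N j \<Delta>)"
    and f: "f \<in> borel_measurable borel" "\<And>x. \<bar>f x\<bar> \<le> B"
  shows "mat_integral \<nu> f = (\<Sum>j\<in>J. mat_integral (N j) f)"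
proof (rule herm_eqI)
  show "herm (mat_integral \<nu> f)" "herm (\<Sum>j\<in>J. mat_integral (N j) f)"
    by (simp_all add: herm_mat_integral herm_sum)
  fix w
  have "integral\<^sup>L (qmeas \<nu> w) f = (\<Sum>j\<in>J. 1 * integral\<^sup>L (qmeas (N j) w) f)"
    using assms finite_measure_qmeas[OF assms(2)] finite_measure_qmeas[OF assms(1)]
    by (intro integral_lincomb_measures[where B=B])
       (auto simp: measure_qmeas qf_sum Re_sum)
  moreover have "Re (qf (mat_integral (N j) f) w) = integral\<^sup>L (qmeas (N j) w) f" if "j \<in> J" for j
    using Re_qf_mat_integral[OF assms(2)[OF that] f] .
  ultimately show "Re (qf (mat_integral \<nu> f) w) = Re (qf (\<Sum>j\<in>J. mat_integral (N j) f) w)"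
    by (simp add: Re_qf_mat_integral[OF assms(1) f] qf_sum Re_sum)
qed

section \<open>Scalar constraint measures\<close>

definition scalar_measure :: "('a::topological_space set \<Rightarrow> complex^1^1) \<Rightarrow> 'a measure" where
  "scalar_measure \<mu> = qmeas \<mu> (axis 1 1)"

lemma sets_scalar_measure [simp]: "sets (scalar_measure \<mu>) = sets borel"
  by (simp add: scalar_measure_def)

lemma mat_1x1_eq_iff: "(X::complex^1^1) = Y \<longleftrightarrow> X$1$1 = Y$1$1"
  by (simp add: vec_eq_iff forall_1)

lemma Cset_1x1_entry:
  assumes "\<mu> \<in> Cset m \<phi>"
  shows "\<mu> X $ 1 $ 1 = of_real (measure (scalar_measure \<mu>) X)"
proof (cases "X \<in> sets borel")
  case True
  have "psd (\<mu> X)" using assms True by (simp add: Cset_def)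
  moreover have "measure (scalar_measure \<mu>) X = Re (\<mu> X $ 1 $ 1)"
    using measure_qmeas[OF Cset_pos_mat_measure[OF assms] True] by (simp add: scalar_measure_def qf_1x1)
  ultimately show ?thesis by (simp add: psd_1x1_iff complex_eq_iff)
next
  case False
  thus ?thesis using assms by (simp add: Cset_def mat_measure_def measure_notin_sets)
qed

lemma finite_measure_scalar_measure: "\<mu> \<in> Cset m \<phi> \<Longrightarrow> finite_measure (scalar_measure \<mu>)"
  unfolding scalar_measure_def by (rule finite_measure_qmeas[OF Cset_pos_mat_measure])

lemma measure_scalar_measure_UNIV: "\<mu> \<in> Cset m \<phi> \<Longrightarrow> measure (scalar_measure \<mu>) UNIV = 1"
  using Cset_1x1_entry[of \<mu> m \<phi> UNIV] by (simp add: Cset_def mat_def)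

lemma bounded_range_abs_le:
  fixes f :: "'a \<Rightarrow> real"
  assumes "bounded (range f)"
  obtains B where "\<And>x. \<bar>f x\<bar> \<le> B"
  using assms by (auto simp: bounded_iff)

lemma integral_scalar_measure_constraints:
  assumes "\<mu> \<in> Cset m \<phi>"
    and \<phi>: "\<forall>r<m. \<phi> r \<in> borel_measurable borel" "\<forall>r<m. bounded (range (\<phi> r))"
  shows "\<forall>r<m. integral\<^sup>L (scalar_measure \<mu>) (\<phi> r) = 0"
proof (intro allI impI)
  fix r assume r: "r < m"
  obtain B where "\<And>x. \<bar>\<phi> r x\<bar> \<le> B" using bounded_range_abs_le \<phi>(2) r by blast
  thus "integral\<^sup>L (scalar_measure \<mu>) (\<phi> r) = 0"
    using Re_qf_mat_integral[OF Cset_pos_mat_measure[OF assms(1)], of "\<phi> r" B "axis 1 1"] assms(1) \<phi>(1) r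
    by (simp add: scalar_measure_def Cset_def)
qed

lemma lincomb_in_Cset_1x1:
  fixes P Q :: "'a::topological_space measure"
  assumes P: "finite_measure P" "sets P = sets borel" and Q: "finite_measure Q" "sets Q = sets borel"
    and nonneg: "\<And>X. 0 \<le> a * measure P X + b * measure Q X"
    and one: "a * measure P UNIV + b * measure Q UNIV = 1"
    and \<phi>: "\<forall>r<m. \<phi> r \<in> borel_measurable borel" "\<forall>r<m. bounded (range (\<phi> r))"
    and int: "\<forall>r<m. integral\<^sup>L P (\<phi> r) = 0" "\<forall>r<m. integral\<^sup>L Q (\<phi> r) = 0"
  shows "(\<lambda>X. (\<chi> i j. of_real (a * measure P X + b * measure Q X)) :: complex^1^1) \<in> Cset m \<phi>"
    (is "?\<sigma> \<in> _")
proof -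
  let ?v = "\<lambda>X. a * measure P X + b * measure Q X"
  have entry: "?\<sigma> X $ i $ j = of_real (?v X)" for X i j by simp
  have "mat_measure ?\<sigma>"
    unfolding mat_measure_def
  proof (intro conjI allI impI)
    fix X :: "'a set" assume "X \<notin> sets borel"
    thus "?\<sigma> X = 0" using P(2) Q(2) by (simp add: vec_eq_iff measure_notin_sets)
  next
    fix A :: "nat \<Rightarrow> 'a set" and i j assume A: "range A \<subseteq> sets borel" "disjoint_family A"
    have "(\<lambda>k. ?v (A k)) sums ?v (\<Union>k. A k)"
      using finite_measure.finite_measure_UNION[OF P(1)] finite_measure.finite_measure_UNION[OF Q(1)]
        A P(2) Q(2) by (intro sums_add sums_mult) auto
    thus "(\<lambda>k. ?\<sigma> (A k) $ i $ j) sums (?\<sigma> (\<Union>k. A k) $ i $ j)"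
      by (simp only: entry sums_of_real_iff)
  qed
  moreover have "psd (?\<sigma> X)" for X
    using nonneg by (simp add: psd_1x1_iff)
  moreover have "?\<sigma> UNIV = mat 1"
    using one by (simp add: mat_1x1_eq_iff mat_def)
  moreover have "mat_integral ?\<sigma> (\<phi> r) = 0" if r: "r < m" for r
  proof (rule mat_integral_eq_0I)
    fix v :: "complex^1"
    obtain B where B: "\<And>x. \<bar>\<phi> r x\<bar> \<le> B" using bounded_range_abs_le \<phi>(2) r by blast
    have pos: "pos_mat_measure ?\<sigma>"
      using calculation by (simp add: pos_mat_measure_def)
    have "integral\<^sup>L (qmeas ?\<sigma> v) (\<phi> r)
        = (\<Sum>p\<in>UNIV. (if p then Re (cnj (v$1) * v$1) * a else Re (cnj (v$1) * v$1) * b)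
            * integral\<^sup>L (if p then P else Q) (\<phi> r))"
    proof (rule integral_lincomb_measures[where B=B])
      show "measure (qmeas ?\<sigma> v) X = (\<Sum>p\<in>UNIV. (if p then Re (cnj (v$1) * v$1) * a else Re (cnj (v$1) * v$1) * b)
            * measure (if p then P else Q) X)" if "X \<in> sets (qmeas ?\<sigma> v)" for X
        using measure_qmeas[OF pos, of X v] that
        by (simp add: qf_1x1 UNIV_bool algebra_simps)
    qed (use finite_measure_qmeas[OF pos] P Q \<phi>(1) r B in auto)
    thus "integral\<^sup>L (qmeas ?\<sigma> v) (\<phi> r) = 0"
      using int r by (simp add: UNIV_bool)
  qed
  ultimately show ?thesis by (simp add: Cset_def)
qed

lemma extreme_pt_midpoint:
  assumes "extreme_pt C \<mu>" "\<sigma>1 \<in> C" "\<sigma>2 \<in> C"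
    and "\<mu> = (\<lambda>X. (1/2) *\<^sub>R \<sigma>1 X + (1 - 1/2) *\<^sub>R \<sigma>2 X)"
  shows "\<sigma>1 = \<mu>"
proof -
  have ext: "\<forall>\<nu>1\<in>C. \<forall>\<nu>2\<in>C. \<forall>t::real. 0 < t \<and> t < 1 \<and>
      \<mu> = (\<lambda>X. t *\<^sub>R \<nu>1 X + (1 - t) *\<^sub>R \<nu>2 X) \<longrightarrow> \<nu>1 = \<mu> \<and> \<nu>2 = \<mu>"
    using assms(1) by (simp add: extreme_pt_def)
  show ?thesis
    using mp[OF spec[OF bspec[OF bspec[OF ext assms(2)] assms(3)], of "1/2"]] assms(4) by simp
qed

text \<open>Otherwise \<open>\<mu> \<plusminus> \<epsilon> (\<rho> - \<rho>(X) \<mu>)\<close> would be two distinct points of \<open>\<C>(X,1,\<phi>)\<close>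
  with midpoint \<open>\<mu>\<close>.\<close>

lemma extreme_pt_1x1_dominated_proportional:
  fixes \<mu> :: "'a::topological_space set \<Rightarrow> complex^1^1" and \<rho> :: "'a measure"
  assumes ext: "extreme_pt (Cset m \<phi>) \<mu>"
    and \<phi>: "\<forall>r<m. \<phi> r \<in> borel_measurable borel" "\<forall>r<m. bounded (range (\<phi> r))"
    and \<rho>: "finite_measure \<rho>" "sets \<rho> = sets borel"
    and dom: "\<And>X. X \<in> sets borel \<Longrightarrow> measure \<rho> X \<le> c * measure (scalar_measure \<mu>) X"
    and int: "\<forall>r<m. integral\<^sup>L \<rho> (\<phi> r) = 0"
  shows "measure \<rho> X = measure \<rho> UNIV * measure (scalar_measure \<mu>) X"
proof -
  let ?M = "scalar_measure \<mu>"
  let ?a = "measure \<rho> UNIV"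
  have \<mu>C: "\<mu> \<in> Cset m \<phi>" using ext by (simp add: extreme_pt_def)
  note M = finite_measure_scalar_measure[OF \<mu>C] sets_scalar_measure measure_scalar_measure_UNIV[OF \<mu>C]
  define \<epsilon> where "\<epsilon> = 1 / (\<bar>c\<bar> + ?a + 1)"
  have pos: "0 < \<bar>c\<bar> + ?a + 1" using measure_nonneg[of \<rho> UNIV] by linarith
  have \<epsilon>0: "0 < \<epsilon>" and \<epsilon>a: "\<epsilon> * ?a \<le> 1" and \<epsilon>c: "\<epsilon> * \<bar>c\<bar> \<le> 1"
    using pos measure_nonneg[of \<rho> UNIV] by (simp_all add: \<epsilon>_def divide_le_eq)
  define \<sigma> where "\<sigma> s = (\<lambda>X. (\<chi> i j. of_real ((1 - s * \<epsilon> * ?a) * measure ?M X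
      + (s * \<epsilon>) * measure \<rho> X)) :: complex^1^1)" for s :: real
  have \<sigma>C: "\<sigma> s \<in> Cset m \<phi>" if s: "s = 1 \<or> s = -1" for s
    unfolding \<sigma>_def
  proof (rule lincomb_in_Cset_1x1[OF M(1,2) \<rho> _ _ \<phi>])
    show "0 \<le> (1 - s * \<epsilon> * ?a) * measure ?M X + s * \<epsilon> * measure \<rho> X" for X
    proof (cases "X \<in> sets borel")
      case True
      have "\<epsilon> * measure \<rho> X \<le> \<epsilon> * (\<bar>c\<bar> * measure ?M X)"
        using dom[OF True] \<epsilon>0 mult_right_mono[OF abs_ge_self[of c] measure_nonneg[of ?M X]]
        by (intro mult_left_mono) auto
      also have "\<dots> \<le> measure ?M X"
        using mult_right_mono[OF \<epsilon>c measure_nonneg[of ?M X]] by (simp add: mult.assoc)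
      finally have e1: "\<epsilon> * measure \<rho> X \<le> measure ?M X" .
      have e2: "\<epsilon> * ?a * measure ?M X \<le> measure ?M X"
        using mult_right_mono[OF \<epsilon>a measure_nonneg[of ?M X]] by simp
      have e3: "0 \<le> \<epsilon> * measure \<rho> X" "0 \<le> \<epsilon> * ?a * measure ?M X"
        using \<epsilon>0 by simp_all
      have "(1 - s * \<epsilon> * ?a) * measure ?M X + s * \<epsilon> * measure \<rho> X
          = measure ?M X - s * (\<epsilon> * ?a * measure ?M X) + s * (\<epsilon> * measure \<rho> X)"
        by (simp add: algebra_simps)
      thus ?thesis using s e1 e2 e3 by auto
    qed (simp add: \<rho>(2) measure_notin_sets)
    show "(1 - s * \<epsilon> * ?a) * measure ?M UNIV + s * \<epsilon> * ?a = 1"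
      using M(3) by simp
  qed (use int integral_scalar_measure_constraints[OF \<mu>C \<phi>] in simp_all)
  have "((1/2) *\<^sub>R \<sigma> 1 X + (1 - 1/2) *\<^sub>R \<sigma> (-1) X) $ 1 $ 1 = of_real (measure ?M X)" for X
    by (simp only: vector_add_component vector_scaleR_component)
       (simp add: \<sigma>_def scaleR_conv_of_real algebra_simps)
  hence mid: "\<mu> = (\<lambda>X. (1/2) *\<^sub>R \<sigma> 1 X + (1 - 1/2) *\<^sub>R \<sigma> (-1) X)"
    by (simp add: fun_eq_iff mat_1x1_eq_iff Cset_1x1_entry[OF \<mu>C])
  hence "\<sigma> 1 = \<mu>" using extreme_pt_midpoint[OF ext \<sigma>C[of 1] \<sigma>C[of "-1"]] by simp
  hence "\<sigma> 1 X $ 1 $ 1 = \<mu> X $ 1 $ 1" by simp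
  hence "(1 - \<epsilon> * ?a) * measure ?M X + \<epsilon> * measure \<rho> X = measure ?M X"
    by (simp add: \<sigma>_def Cset_1x1_entry[OF \<mu>C] del: of_real_add of_real_mult of_real_diff)
  hence "\<epsilon> * (measure \<rho> X - ?a * measure ?M X) = 0"
    by (simp add: algebra_simps)
  thus ?thesis using \<epsilon>0 by simp
qed

section \<open>Combining scalar constraint measures with positive weights\<close>

lemma qf_sum_cscale_Cset:
  fixes \<mu>s :: "'k \<Rightarrow> 'a::topological_space set \<Rightarrow> complex^1^1"
  assumes "\<forall>k\<in>K. \<mu>s k \<in> Cset m \<phi>" "\<forall>k\<in>K. herm (L k)"
  shows "qf (\<Sum>k\<in>K. cscale (\<mu>s k \<Delta> $ 1 $ 1) (L k)) w
    = of_real (\<Sum>k\<in>K. measure (scalar_measure (\<mu>s k)) \<Delta> * Re (qf (L k) w))"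
proof -
  have "\<mu>s k \<Delta> $ 1 $ 1 * qf (L k) w = of_real (measure (scalar_measure (\<mu>s k)) \<Delta> * Re (qf (L k) w))"
    if "k \<in> K" for k
    using assms that by (subst herm_qf_real) (auto simp: Cset_1x1_entry)
  thus ?thesis by (simp add: qf_sum qf_cscale)
qed

lemma sum_cscale_in_Cset:
  fixes \<mu>s :: "'k \<Rightarrow> 'a::topological_space set \<Rightarrow> complex^1^1" and L :: "'k \<Rightarrow> complex^'N^'N"
  assumes \<mu>s: "\<forall>k\<in>K. \<mu>s k \<in> Cset m \<phi>"
    and L: "\<forall>k\<in>K. psd (L k)" "(\<Sum>k\<in>K. L k) = mat 1"
    and \<phi>: "\<forall>r<m. \<phi> r \<in> borel_measurable borel" "\<forall>r<m. bounded (range (\<phi> r))"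
  shows "(\<lambda>\<Delta>. \<Sum>k\<in>K. cscale (\<mu>s k \<Delta> $ 1 $ 1) (L k)) \<in> Cset m \<phi>" (is "?\<mu> \<in> _")
proof -
  let ?M = "\<lambda>k. scalar_measure (\<mu>s k)"
  have herm: "\<forall>k\<in>K. herm (L k)" using L(1) psd_herm by blast
  have entry: "?\<mu> \<Delta> $ i $ j = (\<Sum>k\<in>K. of_real (measure (?M k) \<Delta>) * L k $ i $ j)" for \<Delta> i j
    unfolding cscale_def by (simp add: sum_component) (intro sum.cong refl, simp add: Cset_1x1_entry[OF bspec[OF \<mu>s]])
  have "mat_measure ?\<mu>"
    unfolding mat_measure_def
  proof (intro conjI allI impI)
    fix \<Delta> :: "'a set" assume "\<Delta> \<notin> sets borel"
    thus "?\<mu> \<Delta> = 0" by (simp only: vec_eq_iff entry) (simp add: measure_notin_sets)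
  next
    fix A :: "nat \<Rightarrow> 'a set" and i j assume A: "range A \<subseteq> sets borel" "disjoint_family A"
    have "(\<lambda>q. measure (?M k) (A q)) sums measure (?M k) (\<Union>q. A q)" if "k \<in> K" for k
      using finite_measure.finite_measure_UNION[OF finite_measure_scalar_measure[OF bspec[OF \<mu>s that]], of A]
        A by simp
    hence "(\<lambda>q. \<Sum>k\<in>K. of_real (measure (?M k) (A q)) * L k $ i $ j)
        sums (\<Sum>k\<in>K. of_real (measure (?M k) (\<Union>q. A q)) * L k $ i $ j)"
      by (intro sums_sum sums_mult2) (simp add: sums_of_real_iff)
    thus "(\<lambda>q. ?\<mu> (A q) $ i $ j) sums (?\<mu> (\<Union>q. A q) $ i $ j)"
      by (simp only: entry)
  qed
  moreover have "psd (?\<mu> \<Delta>)" for \<Delta>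
    using L(1) unfolding psd_def qf_sum_cscale_Cset[OF \<mu>s herm]
    by (auto intro!: sum_nonneg mult_nonneg_nonneg)
  moreover have "?\<mu> UNIV = mat 1"
  proof -
    have "cscale (\<mu>s k UNIV $ 1 $ 1) (L k) = L k" if "k \<in> K" for k
      using bspec[OF \<mu>s that] by (simp add: Cset_def mat_def cscale_def vec_eq_iff)
    thus ?thesis using L(2) by simp
  qed
  moreover have "mat_integral ?\<mu> (\<phi> r) = 0" if r: "r < m" for r
  proof (rule mat_integral_eq_0I)
    fix w
    obtain B where B: "\<And>x. \<bar>\<phi> r x\<bar> \<le> B" using bounded_range_abs_le \<phi>(2) r by blast
    have pos: "pos_mat_measure ?\<mu>" using calculation by (simp add: pos_mat_measure_def)
    have "integral\<^sup>L (qmeas ?\<mu> w) (\<phi> r) = (\<Sum>k\<in>K. Re (qf (L k) w) * integral\<^sup>L (?M k) (\<phi> r))"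
    proof (rule integral_lincomb_measures[where B=B])
      show "measure (qmeas ?\<mu> w) A = (\<Sum>k\<in>K. Re (qf (L k) w) * measure (?M k) A)"
        if "A \<in> sets (qmeas ?\<mu> w)" for A
        using measure_qmeas[OF pos, of A w] that
        by (simp add: qf_sum_cscale_Cset[OF \<mu>s herm] mult.commute)
    qed (use finite_measure_qmeas[OF pos] finite_measure_scalar_measure[OF bspec[OF \<mu>s]] \<phi>(1) r B in auto)
    also have "\<dots> = 0"
      using integral_scalar_measure_constraints[OF bspec[OF \<mu>s] \<phi>] r by simp
    finally show "integral\<^sup>L (qmeas ?\<mu> w) (\<phi> r) = 0" .
  qed
  ultimately show ?thesis by (simp add: Cset_def)
qed

section \<open>Separating measures with disjoint closed supports\<close>

lemma supp_closed: "closed (supp \<nu>)"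
proof -
  have "- supp \<nu> = \<Union>{U. open U \<and> \<nu> U = 0}" by (auto simp: supp_def)
  thus ?thesis unfolding closed_def by auto
qed

lemma compact_null_open_cover:
  assumes M: "finite_measure M" "sets M = sets borel" and "compact K"
    and null: "\<And>x. x \<in> K \<Longrightarrow> \<exists>U. open U \<and> x \<in> U \<and> measure M U = 0"
  shows "\<exists>U. open U \<and> K \<subseteq> U \<and> measure M U = 0"
proof -
  let ?T = "{U. open U \<and> measure M U = 0}"
  have "K \<subseteq> \<Union>?T" using null by blast
  then obtain T where T: "T \<subseteq> ?T" "finite T" "K \<subseteq> \<Union>T"
    using compactE[OF \<open>compact K\<close>, of ?T] by blast
  have "measure M (\<Union>T) \<le> (\<Sum>S\<in>T. measure M S)"
    using T M(2) by (intro measure_Union_le) auto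
  also have "\<dots> = 0" using T by (intro sum.neutral) auto
  finally have "measure M (\<Union>T) = 0" by (simp add: measure_le_0_iff)
  thus ?thesis using T by blast
qed

text \<open>Covering the compact support of \<open>M\<^sub>2\<close> by an \<open>M\<^sub>1\<close>-null open set \<open>U\<close>, the closed
  set \<open>-U\<close> avoids that support and hence is \<open>M\<^sub>2\<close>-null.\<close>

lemma disjoint_supports_separating_set:
  fixes M1 M2 :: "'a::topological_space measure"
  assumes "compact (UNIV :: 'a set)"
    and M1: "finite_measure M1" "sets M1 = sets borel" and M2: "finite_measure M2" "sets M2 = sets borel"
    and "closed K2" "K1 \<inter> K2 = {}"
    and null1: "\<And>x. x \<notin> K1 \<Longrightarrow> \<exists>U. open U \<and> x \<in> U \<and> measure M1 U = 0"
    and null2: "\<And>x. x \<notin> K2 \<Longrightarrow> \<exists>U. open U \<and> x \<in> U \<and> measure M2 U = 0"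
  shows "\<exists>E\<in>sets borel. measure M1 (- E) = 0 \<and> measure M2 E = 0"
proof -
  have "compact K2" using compact_Int_closed[OF assms(1) \<open>closed K2\<close>] by simp
  moreover have "\<exists>U. open U \<and> x \<in> U \<and> measure M1 U = 0" if "x \<in> K2" for x
    using that assms(7) by (intro null1) blast
  ultimately obtain U where U: "open U" "K2 \<subseteq> U" "measure M1 U = 0"
    using compact_null_open_cover[OF M1, of K2] by blast
  have "compact (- U)" using compact_Int_closed[OF assms(1), of "- U"] U(1) by (simp add: closed_Compl)
  moreover have "\<exists>V. open V \<and> x \<in> V \<and> measure M2 V = 0" if "x \<in> - U" for x
    using that U(2) by (intro null2) blast
  ultimately obtain W where W: "open W" "- U \<subseteq> W" "measure M2 W = 0"
    using compact_null_open_cover[OF M2, of "- U"] by blast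
  have "measure M2 (- U) \<le> measure M2 W"
    using W(1,2) M2 by (intro finite_measure.finite_measure_mono) auto
  hence "measure M2 (- U) = 0" using W(3) by (simp add: measure_le_0_iff)
  moreover have "- U \<in> sets borel" using U(1) by (simp add: borel_closed closed_Compl)
  ultimately show ?thesis using U(3) by (intro bexI[of _ "- U"]) simp_all
qed

lemma disjoint_supports_carriers:
  fixes M :: "'i \<Rightarrow> 'a::topological_space measure"
  assumes "compact (UNIV :: 'a set)" "finite I"
    and M: "\<And>k. k \<in> I \<Longrightarrow> finite_measure (M k)" "\<And>k. k \<in> I \<Longrightarrow> sets (M k) = sets borel"
    and K: "\<And>k. k \<in> I \<Longrightarrow> closed (K k)"
    and disj: "\<And>k l. k \<in> I \<Longrightarrow> l \<in> I \<Longrightarrow> k \<noteq> l \<Longrightarrow> K k \<inter> K l = {}"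
    and null: "\<And>k x. k \<in> I \<Longrightarrow> x \<notin> K k \<Longrightarrow> \<exists>U. open U \<and> x \<in> U \<and> measure (M k) U = 0"
  obtains S where "\<And>k. k \<in> I \<Longrightarrow> S k \<in> sets borel" "\<And>k. k \<in> I \<Longrightarrow> measure (M k) (- S k) = 0"
    "\<And>k l. k \<in> I \<Longrightarrow> l \<in> I \<Longrightarrow> k \<noteq> l \<Longrightarrow> S k \<inter> S l = {}"
proof -
  define E where "E k l = (SOME E. E \<in> sets borel \<and> measure (M k) (- E) = 0 \<and> measure (M l) E = 0)"
    for k l
  have E: "E k l \<in> sets borel \<and> measure (M k) (- E k l) = 0 \<and> measure (M l) (E k l) = 0"
    if kl: "k \<in> I" "l \<in> I" "k \<noteq> l" for k l
  proof -
    have "\<exists>E. E \<in> sets borel \<and> measure (M k) (- E) = 0 \<and> measure (M l) E = 0"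
      using disjoint_supports_separating_set[OF assms(1) M(1,2)[OF kl(1)] M(1,2)[OF kl(2)]
          K[OF kl(2)] disj[OF kl] null[OF kl(1)] null[OF kl(2)]] by blast
    thus ?thesis unfolding E_def by (rule someI_ex)
  qed
  define S where "S k = - (\<Union>l\<in>I - {k}. - E k l \<union> E l k)" for k
  have parts_sets: "- E k l \<union> E l k \<in> sets borel" if "k \<in> I" "l \<in> I - {k}" for k l
    using E[of k l] E[of l k] that by (intro sets.Un borel_comp) auto
  show ?thesis
  proof (rule that)
    show "S k \<in> sets borel" if "k \<in> I" for k
      unfolding S_def using parts_sets[OF that] assms(2) by (intro borel_comp sets.finite_UN) auto
    show "S k \<inter> S l = {}" if "k \<in> I" "l \<in> I" "k \<noteq> l" for k l
      using that by (auto simp: S_def)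
    show "measure (M k) (- S k) = 0" if k: "k \<in> I" for k
    proof -
      have "measure (M k) (- S k) \<le> (\<Sum>l\<in>I - {k}. measure (M k) (- E k l \<union> E l k))"
        unfolding S_def double_complement
        using parts_sets[OF k] assms(2) M(2)[OF k] by (intro measure_UNION_le) auto
      also have "\<dots> \<le> (\<Sum>l\<in>I - {k}. measure (M k) (- E k l) + measure (M k) (E l k))"
        using E k M(2)[OF k] by (intro sum_mono measure_Un_le) (auto intro: borel_comp)
      also have "\<dots> = 0" using E k by (intro sum.neutral) auto
      finally show ?thesis by (simp add: measure_le_0_iff)
    qed
  qed
qed

section \<open>Splitting a convex decomposition along the carriers\<close>

locale convex_split =
  fixes \<phi> :: "nat \<Rightarrow> 'a::topological_space \<Rightarrow> real"
    and \<mu>s :: "nat \<Rightarrow> 'a set \<Rightarrow> complex^1^1"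
    and L :: "nat \<Rightarrow> complex^'N^'N"
    and S :: "nat \<Rightarrow> 'a set"
    and \<nu>1 \<nu>2 :: "'a set \<Rightarrow> complex^'N^'N"
    and t :: real
    and m n :: nat
  assumes \<phi>_measurable: "\<forall>r<m. \<phi> r \<in> borel_measurable borel"
    and \<phi>_bounded: "\<forall>r<m. bounded (range (\<phi> r))"
    and extreme: "\<forall>k<n. extreme_pt (Cset m \<phi>) (\<mu>s k)"
    and S_sets: "\<And>k. k < n \<Longrightarrow> S k \<in> sets borel"
    and S_full: "\<And>k. k < n \<Longrightarrow> measure (scalar_measure (\<mu>s k)) (- S k) = 0"
    and S_disjoint: "\<And>k l. k < n \<Longrightarrow> l < n \<Longrightarrow> k \<noteq> l \<Longrightarrow> S k \<inter> S l = {}"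
    and L_psd: "\<forall>k<n. psd (L k)"
    and L_sum: "(\<Sum>k<n. L k) = mat 1"
    and weakly_indep: "weakly_independent n (\<lambda>k. mat_range (L k))"
    and \<nu>1: "\<nu>1 \<in> Cset m \<phi>" and \<nu>2: "\<nu>2 \<in> Cset m \<phi>"
    and t: "0 < t" "t < 1"
    and split: "\<And>\<Delta>. (\<Sum>k<n. cscale (\<mu>s k \<Delta> $ 1 $ 1) (L k)) = t *\<^sub>R \<nu>1 \<Delta> + (1 - t) *\<^sub>R \<nu>2 \<Delta>"
begin

abbreviation \<mu> :: "'a set \<Rightarrow> complex^'N^'N" where
  "\<mu> \<equiv> \<lambda>\<Delta>. \<Sum>k<n. cscale (\<mu>s k \<Delta> $ 1 $ 1) (L k)"

abbreviation M :: "nat \<Rightarrow> 'a measure" where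
  "M k \<equiv> scalar_measure (\<mu>s k)"

lemma \<mu>s_Cset: "k < n \<Longrightarrow> \<mu>s k \<in> Cset m \<phi>"
  using extreme by (simp add: extreme_pt_def)

lemma finite_measure_M: "k < n \<Longrightarrow> finite_measure (M k)"
  by (rule finite_measure_scalar_measure[OF \<mu>s_Cset])

lemma L_herm: "k < n \<Longrightarrow> herm (L k)"
  using L_psd psd_herm by blast

lemma \<phi>_bound:
  assumes "r < m"
  obtains B where "\<And>x. \<bar>\<phi> r x\<bar> \<le> B"
  using bounded_range_abs_le \<phi>_bounded assms by blast

lemma \<nu>1_pos: "pos_mat_measure \<nu>1"
  by (rule Cset_pos_mat_measure[OF \<nu>1])

lemma Re_qf_\<mu>: "Re (qf (\<mu> \<Delta>) w)
    = (\<Sum>k<n. measure (M k) \<Delta> * Re (qf (L k) w))"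
  using qf_sum_cscale_Cset[of "{..<n}" \<mu>s m \<phi> L \<Delta> w] \<mu>s_Cset L_herm by simp

lemma Re_qf_\<nu>1_dominated:
  assumes "\<Delta> \<in> sets borel"
  shows "t * Re (qf (\<nu>1 \<Delta>) w) \<le> Re (qf (\<mu> \<Delta>) w)"
proof -
  have "0 \<le> Re (qf (\<nu>2 \<Delta>) w)" using \<nu>2 assms by (simp add: Cset_def psd_def)
  moreover have "Re (qf (\<mu> \<Delta>) w) = t * Re (qf (\<nu>1 \<Delta>) w) + (1 - t) * Re (qf (\<nu>2 \<Delta>) w)"
    unfolding split by (simp add: qf_add qf_scaleR)
  ultimately show ?thesis using t(2) by simp
qed

lemma measure_M_outside:
  assumes "l < n" "\<Delta> \<subseteq> - S l"
  shows "measure (M l) \<Delta> = 0"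
proof -
  have "measure (M l) \<Delta> \<le> measure (M l) (- S l)"
    using assms S_sets[OF assms(1)]
    by (intro finite_measure.finite_measure_mono[OF finite_measure_M]) (auto intro: borel_comp)
  thus ?thesis using S_full[OF assms(1)] by (simp add: measure_le_0_iff)
qed

lemma Re_qf_\<mu>_carrier:
  assumes k: "k < n" and "\<Delta> \<in> sets borel"
  shows "Re (qf (\<mu> (\<Delta> \<inter> S k)) w) = measure (M k) \<Delta> * Re (qf (L k) w)"
proof -
  have "measure (M l) (\<Delta> \<inter> S k) = 0" if "l < n" "l \<noteq> k" for l
    using S_disjoint[OF k that(1)] that by (intro measure_M_outside) auto
  hence "(\<Sum>l<n. measure (M l) (\<Delta> \<inter> S k) * Re (qf (L l) w))
      = measure (M k) (\<Delta> \<inter> S k) * Re (qf (L k) w)"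
    using k by (subst sum.mono_neutral_right[of "{..<n}" "{k}"]) auto
  moreover have "measure (M k) \<Delta> = measure (M k) (\<Delta> \<inter> S k) + measure (M k) (\<Delta> - S k)"
    using assms S_sets[OF k]
    by (subst finite_measure.finite_measure_Union[OF finite_measure_M, symmetric]) (auto intro: arg_cong)
  moreover have "measure (M k) (\<Delta> - S k) = 0"
    using k by (intro measure_M_outside) auto
  ultimately show ?thesis by (simp add: Re_qf_\<mu>)
qed

definition N :: "nat \<Rightarrow> 'a set \<Rightarrow> complex^'N^'N" where
  "N k \<Delta> = (if \<Delta> \<in> sets borel then \<nu>1 (\<Delta> \<inter> S k) else 0)"

lemma psd_N: "k < n \<Longrightarrow> psd (N k \<Delta>)"
  using \<nu>1 S_sets by (auto simp: N_def Cset_def psd_def)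

lemma pos_mat_measure_N:
  assumes k: "k < n"
  shows "pos_mat_measure (N k)"
proof -
  have "mat_measure (N k)"
    unfolding mat_measure_def
  proof (intro conjI allI impI)
    fix \<Delta> :: "'a set" assume "\<Delta> \<notin> sets borel" thus "N k \<Delta> = 0" by (simp add: N_def)
  next
    fix A :: "nat \<Rightarrow> 'a set" and i j assume A: "range A \<subseteq> sets borel" "disjoint_family A"
    have "(\<lambda>q. \<nu>1 (A q \<inter> S k) $ i $ j) sums (\<nu>1 (\<Union>q. A q \<inter> S k) $ i $ j)"
      using A S_sets[OF k] \<nu>1_pos
      by (intro mat_measure_sums) (auto simp: pos_mat_measure_def disjoint_family_on_def)
    thus "(\<lambda>q. N k (A q) $ i $ j) sums (N k (\<Union>q. A q) $ i $ j)"
      using A by (simp add: N_def image_subset_iff sets.countable_UN)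
  qed
  thus ?thesis using psd_N[OF k] by (simp add: pos_mat_measure_def)
qed

lemma Re_qf_N_le:
  assumes "k < n"
  shows "Re (qf (N k \<Delta>) w) \<le> measure (M k) \<Delta> / t * Re (qf (L k) w)"
proof (cases "\<Delta> \<in> sets borel")
  case True
  hence "t * Re (qf (N k \<Delta>) w) \<le> measure (M k) \<Delta> * Re (qf (L k) w)"
    using Re_qf_\<nu>1_dominated[of "\<Delta> \<inter> S k" w] Re_qf_\<mu>_carrier[OF assms True] S_sets[OF assms]
    by (simp add: N_def)
  thus ?thesis using t(1) by (simp add: field_simps)
next
  case False thus ?thesis by (simp add: N_def measure_notin_sets)
qed

lemma N_lives_on_range:
  assumes "k < n"
  shows "N k \<Delta> ** range_proj (L k) = N k \<Delta>" "range_proj (L k) ** N k \<Delta> = N k \<Delta>"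
  using psd_dominated_lives_on_range[OF psd_N[OF assms] L_psd[rule_format, OF assms] Re_qf_N_le[OF assms]]
  by simp_all

text \<open>The part of \<open>\<nu>\<^sub>1\<close> off the carriers is dominated by \<open>\<mu>/t\<close>, which vanishes there.\<close>

lemma \<nu>1_eq_sum_N:
  assumes \<Delta>: "\<Delta> \<in> sets borel"
  shows "\<nu>1 \<Delta> = (\<Sum>k<n. N k \<Delta>)"
proof (rule herm_eqI)
  show "herm (\<nu>1 \<Delta>)" "herm (\<Sum>k<n. N k \<Delta>)"
    using \<nu>1 \<Delta> psd_N by (auto simp: Cset_def psd_herm intro!: herm_sum)
  fix w
  let ?Q = "qmeas \<nu>1 w"
  define R where "R = \<Delta> - (\<Union>k<n. S k)"
  have R: "R \<in> sets borel" "(\<Union>k<n. \<Delta> \<inter> S k) \<in> sets borel"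
    using \<Delta> S_sets by (auto simp: R_def)
  have "measure ?Q (R \<union> (\<Union>k<n. \<Delta> \<inter> S k)) = measure ?Q R + measure ?Q (\<Union>k<n. \<Delta> \<inter> S k)"
    using R by (intro finite_measure.finite_measure_Union[OF finite_measure_qmeas[OF \<nu>1_pos]])
      (auto simp: R_def)
  moreover have "R \<union> (\<Union>k<n. \<Delta> \<inter> S k) = \<Delta>" by (auto simp: R_def)
  ultimately have "measure ?Q \<Delta> = measure ?Q R + measure ?Q (\<Union>k<n. \<Delta> \<inter> S k)"
    by simp
  also have "measure ?Q (\<Union>k<n. \<Delta> \<inter> S k) = (\<Sum>k<n. measure ?Q (\<Delta> \<inter> S k))"
    using \<Delta> S_sets S_disjoint
    by (intro finite_measure.finite_measure_finite_Union[OF finite_measure_qmeas[OF \<nu>1_pos]])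
       (auto simp: disjoint_family_on_def)
  also have "measure ?Q R = 0"
  proof -
    have "measure (M l) R = 0" if "l < n" for l
      using that by (intro measure_M_outside) (auto simp: R_def)
    hence "t * Re (qf (\<nu>1 R) w) \<le> 0" using Re_qf_\<nu>1_dominated[OF R(1), of w] by (simp add: Re_qf_\<mu>)
    moreover have "0 \<le> Re (qf (\<nu>1 R) w)" using \<nu>1 R(1) by (simp add: Cset_def psd_def)
    ultimately show ?thesis using t(1) measure_qmeas[OF \<nu>1_pos R(1)] by (simp add: mult_le_0_iff)
  qed
  finally show "Re (qf (\<nu>1 \<Delta>) w) = Re (qf (\<Sum>k<n. N k \<Delta>) w)"
    using \<Delta> S_sets measure_qmeas[OF \<nu>1_pos]
    by (simp add: N_def qf_sum Re_sum)
qed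

lemma weakly_independent_range_zero:
  assumes "\<forall>j<n. T j ** range_proj (L j) = T j \<and> range_proj (L j) ** T j = T j"
    and "(\<Sum>j<n. T j) = 0" and "k < n"
  shows "T k = 0"
proof -
  have "\<forall>j<n. lives_on (T j) (mat_range (L j))"
    using assms(1) lives_on_range_projI by blast
  thus ?thesis
    using weakly_indep[unfolded weakly_independent_def, rule_format, of T] assms(2,3) by blast
qed

lemma integral_N_constraint:
  assumes r: "r < m" and k: "k < n"
  shows "integral\<^sup>L (qmeas (N k) w) (\<phi> r) = 0"
proof -
  obtain B where B: "\<And>x. \<bar>\<phi> r x\<bar> \<le> B" using \<phi>_bound[OF r] by blast
  define T where "T j = mat_integral (N j) (\<phi> r)" for j
  have Re_qf_T: "Re (qf (T j) v) = integral\<^sup>L (qmeas (N j) v) (\<phi> r)" if "j < n" for j v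
    unfolding T_def
    by (rule Re_qf_mat_integral[OF pos_mat_measure_N[OF that] \<phi>_measurable[rule_format, OF r] B])
  have "T j ** range_proj (L j) = T j \<and> range_proj (L j) ** T j = T j" if j: "j < n" for j
  proof -
    have "qf (N j \<Delta>) (range_proj (L j) *v v) = qf (N j \<Delta>) v" for \<Delta> v
      using qf_conj_adj[OF adj_range_proj, of "L j" "N j \<Delta>" v] N_lives_on_range[OF j]
      by (simp add: matrix_mul_assoc)
    hence "qmeas (N j) (range_proj (L j) *v v) = qmeas (N j) v" for v
      by (simp add: qmeas_def)
    hence "Re (qf (mat_integral (N j) (\<phi> r)) v)
        = Re (qf (mat_integral (N j) (\<phi> r)) (range_proj (L j) *v v))" for v
      using Re_qf_T[OF j] by (simp add: T_def)
    from herm_lives_on_range[OF herm_mat_integral this] show ?thesis by (simp add: T_def)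
  qed
  moreover have "(\<Sum>j<n. T j) = 0"
    using mat_integral_sum[OF \<nu>1_pos pos_mat_measure_N \<nu>1_eq_sum_N \<phi>_measurable[rule_format, OF r] B]
      \<nu>1 r by (simp add: T_def Cset_def)
  ultimately have "T k = 0" using weakly_independent_range_zero k by blast
  thus ?thesis using Re_qf_T[OF k, of w] by simp
qed

lemma N_UNIV: "k < n \<Longrightarrow> N k UNIV = L k"
proof -
  assume k: "k < n"
  define T where "T j = N j UNIV - L j" for j
  have "T j ** range_proj (L j) = T j \<and> range_proj (L j) ** T j = T j" if j: "j < n" for j
    using N_lives_on_range[OF j] herm_range_proj_mult_right[OF L_herm[OF j]] range_proj_mult_left[of "L j"]
    by (simp add: T_def matrix_eq matrix_vector_mul_assoc[symmetric] matrix_vector_mult_diff_distrib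
        matrix_vector_mult_diff_rdistrib)
  moreover have "(\<Sum>j<n. T j) = 0"
    using \<nu>1_eq_sum_N[of UNIV] \<nu>1 L_sum by (simp add: T_def sum_subtractf Cset_def)
  ultimately have "T k = 0" using weakly_independent_range_zero k by blast
  thus ?thesis by (simp add: T_def)
qed

lemma Re_qf_N:
  assumes k: "k < n"
  shows "Re (qf (N k \<Delta>) w) = measure (M k) \<Delta> * Re (qf (L k) w)"
proof -
  let ?\<rho> = "qmeas (N k) w"
  have "measure ?\<rho> X \<le> Re (qf (L k) w) / t * measure (M k) X" if "X \<in> sets borel" for X
    using Re_qf_N_le[OF k] measure_qmeas[OF pos_mat_measure_N[OF k] that] by (simp add: mult.commute)
  hence "measure ?\<rho> \<Delta> = measure ?\<rho> UNIV * measure (M k) \<Delta>"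
    using extreme k integral_N_constraint[OF _ k] \<phi>_measurable \<phi>_bounded
    by (intro extreme_pt_1x1_dominated_proportional[where c="Re (qf (L k) w) / t"])
       (auto simp: finite_measure_qmeas[OF pos_mat_measure_N[OF k]])
  moreover have "measure ?\<rho> UNIV = Re (qf (L k) w)"
    using measure_qmeas[OF pos_mat_measure_N[OF k]] N_UNIV[OF k] by simp
  moreover have "measure ?\<rho> \<Delta> = Re (qf (N k \<Delta>) w)"
    using measure_qmeas[OF pos_mat_measure_N[OF k], of \<Delta>]
    by (cases "\<Delta> \<in> sets borel") (simp_all add: N_def measure_notin_sets)
  ultimately show ?thesis by simp
qed

lemma \<nu>1_eq: "\<nu>1 = \<mu>"
proof
  fix \<Delta>
  show "\<nu>1 \<Delta> = \<mu> \<Delta>"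
  proof (cases "\<Delta> \<in> sets borel")
    case True
    have "N k \<Delta> = cscale (\<mu>s k \<Delta> $ 1 $ 1) (L k)" if k: "k < n" for k
    proof (rule herm_eqI)
      show "herm (N k \<Delta>)" using psd_herm[OF psd_N[OF k]] .
      show "herm (cscale (\<mu>s k \<Delta> $ 1 $ 1) (L k))"
        using L_herm[OF k] by (simp add: herm_iff_qf_real qf_cscale Cset_1x1_entry[OF \<mu>s_Cset[OF k]])
    qed (simp add: Re_qf_N[OF k] qf_cscale Cset_1x1_entry[OF \<mu>s_Cset[OF k]])
    thus ?thesis using \<nu>1_eq_sum_N[OF True] by simp
  next
    case False
    hence "\<nu>1 \<Delta> = 0" using \<nu>1 by (simp add: Cset_def mat_measure_def)
    moreover have "\<mu>s k \<Delta> = 0" if "k < n" for k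
      using \<mu>s_Cset[OF that] False by (simp add: Cset_def mat_measure_def)
    ultimately show ?thesis by (simp add: cscale_def vec_eq_iff)
  qed
qed

end

lemma Cset_supp_null:
  assumes "\<mu> \<in> Cset m \<phi>" "x \<notin> supp \<mu>"
  shows "\<exists>U. open U \<and> x \<in> U \<and> measure (scalar_measure \<mu>) U = 0"
proof -
  obtain U where "open U" "x \<in> U" "\<mu> U = 0" using assms(2) by (auto simp: supp_def)
  thus ?thesis using Cset_1x1_entry[OF assms(1), of U] by auto
qed

lemma Cset_disjoint_supp_carriers:
  fixes \<mu>s :: "nat \<Rightarrow> 'a::topological_space set \<Rightarrow> complex^1^1"
  assumes "compact (UNIV :: 'a set)" and \<mu>s: "\<forall>k<n. \<mu>s k \<in> Cset m \<phi>"
    and disj: "\<forall>k<n. \<forall>l<n. k \<noteq> l \<longrightarrow> supp (\<mu>s k) \<inter> supp (\<mu>s l) = {}"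
  obtains S where "\<And>k. k < n \<Longrightarrow> S k \<in> sets borel"
    "\<And>k. k < n \<Longrightarrow> measure (scalar_measure (\<mu>s k)) (- S k) = 0"
    "\<And>k l. k < n \<Longrightarrow> l < n \<Longrightarrow> k \<noteq> l \<Longrightarrow> S k \<inter> S l = {}"
proof (rule disjoint_supports_carriers[OF assms(1) finite_lessThan[of n],
      where M = "\<lambda>k. scalar_measure (\<mu>s k)" and K = "\<lambda>k. supp (\<mu>s k)"])
  show "finite_measure (scalar_measure (\<mu>s k))" if "k \<in> {..<n}" for k
    using \<mu>s that finite_measure_scalar_measure by blast
  show "supp (\<mu>s k) \<inter> supp (\<mu>s l) = {}" if "k \<in> {..<n}" "l \<in> {..<n}" "k \<noteq> l" for k l
    using disj that by blast
  show "\<exists>U. open U \<and> x \<in> U \<and> measure (scalar_measure (\<mu>s k)) U = 0"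
    if "k \<in> {..<n}" "x \<notin> supp (\<mu>s k)" for k x
    using Cset_supp_null \<mu>s that by blast
qed (simp_all add: supp_closed, blast)

theorem theorem3p12:
  fixes \<phi> :: "nat \<Rightarrow> 'a::t2_space \<Rightarrow> real"
    and \<mu>s :: "nat \<Rightarrow> 'a set \<Rightarrow> complex^1^1"
    and L :: "nat \<Rightarrow> complex^'N^'N"
    and \<mu> :: "'a set \<Rightarrow> complex^'N^'N"
    and m n :: nat
  assumes "compact (UNIV :: 'a set)"
    and "\<forall>r<m. continuous_on UNIV (\<phi> r)"
    and "\<forall>k<n. extreme_pt (Cset m \<phi>) (\<mu>s k)"
    and "\<forall>k<n. \<forall>l<n. k \<noteq> l \<longrightarrow> supp (\<mu>s k) \<inter> supp (\<mu>s l) = {}"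
    and "\<forall>k<n. psd (L k)"
    and "(\<Sum>k<n. L k) = mat 1"
    and "weakly_independent n (\<lambda>k. mat_range (L k))"
    and "\<mu> = (\<lambda>\<Delta>. \<Sum>k<n. cscale (\<mu>s k \<Delta> $ 1 $ 1) (L k))"
  shows "extreme_pt (Cset m \<phi>) \<mu>"
proof -
  have \<phi>: "\<forall>r<m. \<phi> r \<in> borel_measurable borel" "\<forall>r<m. bounded (range (\<phi> r))"
    using assms(1,2) by (auto intro: borel_measurable_continuous_onI compact_imp_bounded compact_continuous_image)
  have \<mu>s: "\<forall>k<n. \<mu>s k \<in> Cset m \<phi>" using assms(3) by (simp add: extreme_pt_def)
  obtain S where S: "\<And>k. k < n \<Longrightarrow> S k \<in> sets borel"
      "\<And>k. k < n \<Longrightarrow> measure (scalar_measure (\<mu>s k)) (- S k) = 0"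
      "\<And>k l. k < n \<Longrightarrow> l < n \<Longrightarrow> k \<noteq> l \<Longrightarrow> S k \<inter> S l = {}"
    using Cset_disjoint_supp_carriers[OF assms(1) \<mu>s assms(4)] by blast
  have "\<mu> \<in> Cset m \<phi>"
    using sum_cscale_in_Cset[of "{..<n}" \<mu>s m \<phi> L] \<mu>s assms(5,6,8) \<phi> by simp
  moreover have "\<nu>1 = \<mu> \<and> \<nu>2 = \<mu>"
    if \<nu>: "\<nu>1 \<in> Cset m \<phi>" "\<nu>2 \<in> Cset m \<phi>"
      and split: "0 < t \<and> t < 1 \<and> \<mu> = (\<lambda>\<Delta>. t *\<^sub>R \<nu>1 \<Delta> + (1 - t) *\<^sub>R \<nu>2 \<Delta>)" for \<nu>1 \<nu>2 t
  proof -
    interpret first: convex_split \<phi> \<mu>s L S \<nu>1 \<nu>2 t m n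
      by unfold_locales (use assms S \<phi> \<nu> split in \<open>auto simp: fun_eq_iff\<close>)
    interpret second: convex_split \<phi> \<mu>s L S \<nu>2 \<nu>1 "1 - t" m n
      by unfold_locales (use assms S \<phi> \<nu> split in \<open>auto simp: fun_eq_iff add.commute\<close>)
    show ?thesis using first.\<nu>1_eq second.\<nu>1_eq assms(8) by simp
  qed
  ultimately show ?thesis unfolding extreme_pt_def by blast
qed

end
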